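(* Let ${\bm X}=\{1,\dots,n\}$, ${\bm Y}=\{1,\dots,m\}$, let $m^{\bm X}$ ($n\times n$) and $m^{\bm Y}$ ($m\times m$) be row-stochastic transition matrices, $C\in\mathbb{R}_+^{n\times m}$ a cost matrix, $\delta\in(0,1]$, $\epsilon>0$. Let $C^{\epsilon,\delta,(\infty)}$ be the unique matrix satisfying $C^{\epsilon,\delta,(\infty)}_{ij}=\delta C_{ij}+(1-\delta)d^{\epsilon}_{\mathrm W}(m^{\bm X}_i,m^{\bm Y}_j;C^{\epsilon,\delta,(\infty)})$ for all $i,j$. For each $(i,j)$ let $P_{ij}=(P_{ij}^{kl})_{k,l}$ be the optimal (primal) plan and $f_{ij}=(f^k_{ij})_k$, $g_{ij}=(g^l_{ij})_l$ the dual solutions of the problem $d^\epsilon_{\mathrm W}(m^{\bm X}_i,m^{\bm Y}_j;C^{\epsilon,\delta,(\infty)})$. Define tensors $P=(P^{kl}_{ij})$, $F^{kk'}_{ij}=f^{k'}_{ij}\mathbb{1}_{i=k}$, $G^{ll'}_{ij}=g^{l'}_{ij}\mathbb{1}_{j=l}$, and the gradient tensors $\Delta^{kl}_{ij}=\partial C^{\epsilon,\delta,(\infty)}_{ij}/\partial C_{kl}$, $\Gamma^{kk'}_{ij}=\partial C^{\epsilon,\delta,(\infty)}_{ij}/\partial m^{\bm X}_{kk'}$, $\Theta^{ll'}_{ij}=\partial C^{\epsilon,\delta,(\infty)}_{ij}/\partial m^{\bm Y}_{ll'}$. Viewing these tensors as matrices with rows indexed by the pair $(i,j)$ and columns by the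 upper index pair (so $P$ and $\Delta$ are $nm\times nm$), and letting $I_{nm}$ be the $nm\times nm$ identity, $$\Delta=\delta\big(I_{nm}-(1-\delta)P\big)^{-1},\quad\Gamma=(1-\delta)\big(I_{nm}-(1-\delta)P\big)^{-1}F,\quad\Theta=(1-\delta)\big(I_{nm}-(1-\delta)P\big)^{-1}G.$$
   Context: For $\alpha\in\mathcal{P}({\bm X}),\beta\in\mathcal{P}({\bm Y})$ and cost $D$, $d^{\epsilon}_{\mathrm W}(\alpha,\beta;D)=\min_{P\in\mathcal{C}(\alpha,\beta)}\sum_{k,l}P_{kl}D_{kl}+\epsilon\sum_{k,l}P_{kl}\log P_{kl}$, where $\mathcal{C}(\alpha,\beta)$ is the set of nonnegative $n\times m$ matrices with row sums $\alpha$ and column sums $\beta$; the dual solutions $f,g$ are the optimal dual variables (potentials) associated with the row- and column-marginal constraints. $m^{\bm X}_i$ denotes the $i$-th row of $m^{\bm X}$, $m^{\bm X}_{kk'}$ its $(k,k')$ entry. *)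

theory Defs
  imports "HOL-Analysis.Analysis"
begin

text \<open>Finite index sets X and Y are rendered as finite types 'x and 'y.
  Vectors alpha on X are real^'x; n x m matrices are real^'y^'x (row k, column l: P$k$l).\<close>

definition xlogx :: "real \<Rightarrow> real" where
  "xlogx t = (if t = 0 then 0 else t * ln t)"

definition couplings :: "real^'x \<Rightarrow> real^'y \<Rightarrow> (real^'y^'x) set" where
  "couplings \<alpha> \<beta> = {P. (\<forall>k l. 0 \<le> P$k$l) \<and> (\<forall>k. (\<Sum>l\<in>UNIV. P$k$l) = \<alpha>$k)
                        \<and> (\<forall>l. (\<Sum>k\<in>UNIV. P$k$l) = \<beta>$l)}"

definition ent_obj :: "real \<Rightarrow> real^'y^'x \<Rightarrow> real^'y^'x \<Rightarrow> real" where
  "ent_obj \<epsilon> D P = (\<Sum>k\<in>UNIV. \<Sum>l\<in>UNIV. P$k$l * D$k$l) + \<epsilon> * (\<Sum>k\<in>UNIV. \<Sum>l\<in>UNIV. xlogx (P$k$l))"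

definition dW :: "real \<Rightarrow> real^'x \<Rightarrow> real^'y \<Rightarrow> real^'y^'x \<Rightarrow> real" where
  "dW \<epsilon> \<alpha> \<beta> D = Inf (ent_obj \<epsilon> D ` couplings \<alpha> \<beta>)"

definition is_opt_plan :: "real \<Rightarrow> real^'x \<Rightarrow> real^'y \<Rightarrow> real^'y^'x \<Rightarrow> real^'y^'x \<Rightarrow> bool" where
  "is_opt_plan \<epsilon> \<alpha> \<beta> D P \<longleftrightarrow> P \<in> couplings \<alpha> \<beta> \<and>
     (\<forall>Q\<in>couplings \<alpha> \<beta>. ent_obj \<epsilon> D P \<le> ent_obj \<epsilon> D Q)"

definition lagrangian :: "real \<Rightarrow> real^'x \<Rightarrow> real^'y \<Rightarrow> real^'y^'x \<Rightarrow> real^'x \<Rightarrow> real^'y \<Rightarrow> real^'y^'x \<Rightarrow> real" where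
  "lagrangian \<epsilon> \<alpha> \<beta> D f g P = ent_obj \<epsilon> D P
     - (\<Sum>k\<in>UNIV. f$k * ((\<Sum>l\<in>UNIV. P$k$l) - \<alpha>$k))
     - (\<Sum>l\<in>UNIV. g$l * ((\<Sum>k\<in>UNIV. P$k$l) - \<beta>$l))"

definition dual_fun :: "real \<Rightarrow> real^'x \<Rightarrow> real^'y \<Rightarrow> real^'y^'x \<Rightarrow> real^'x \<Rightarrow> real^'y \<Rightarrow> real" where
  "dual_fun \<epsilon> \<alpha> \<beta> D f g = Inf {lagrangian \<epsilon> \<alpha> \<beta> D f g P | P. \<forall>k l. 0 \<le> P$k$l}"

definition is_dual_opt :: "real \<Rightarrow> real^'x \<Rightarrow> real^'y \<Rightarrow> real^'y^'x \<Rightarrow> real^'x \<Rightarrow> real^'y \<Rightarrow> bool" where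
  "is_dual_opt \<epsilon> \<alpha> \<beta> D f g \<longleftrightarrow> (\<forall>f' g'. dual_fun \<epsilon> \<alpha> \<beta> D f' g' \<le> dual_fun \<epsilon> \<alpha> \<beta> D f g)"

definition row_stochastic :: "real^'a^'b \<Rightarrow> bool" where
  "row_stochastic M \<longleftrightarrow> (\<forall>i j. 0 \<le> M$i$j) \<and> (\<forall>i. (\<Sum>j\<in>UNIV. M$i$j) = 1)"

definition is_fixed_cost :: "real \<Rightarrow> real \<Rightarrow> real^'y^'x \<Rightarrow> real^'x^'x \<Rightarrow> real^'y^'y \<Rightarrow> real^'y^'x \<Rightarrow> bool" where
  "is_fixed_cost \<delta> \<epsilon> C mX mY D \<longleftrightarrow>
     (\<forall>i j. D$i$j = \<delta> * C$i$j + (1 - \<delta>) * dW \<epsilon> (mX$i) (mY$j) D)"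

definition Cinf :: "real \<Rightarrow> real \<Rightarrow> real^'y^'x \<Rightarrow> real^'x^'x \<Rightarrow> real^'y^'y \<Rightarrow> real^'y^'x" where
  "Cinf \<delta> \<epsilon> C mX mY = (THE D. is_fixed_cost \<delta> \<epsilon> C mX mY D)"

end

theory Submission
  imports Defs
begin

text \<open>For optimal potentials \<open>f, g\<close> the optimal plan is the Gibbs kernel
  \<open>P = exp ((f \<oplus> g - D) / \<epsilon> - 1)\<close> and \<open>dW = \<langle>f, \<alpha>\<rangle> + \<langle>g, \<beta>\<rangle> - \<epsilon> \<Sum> P\<close>.
  Evaluating the dual at the old potentials, and the primal at the old plan moved to the new
  marginals, squeezes \<open>dW \<alpha>' \<beta>' D'\<close> between
  \<open>dW \<alpha> \<beta> D + \<langle>f, \<alpha>' - \<alpha>\<rangle> + \<langle>g, \<beta>' - \<beta>\<rangle> + \<langle>P, D' - D\<rangle> \<plusminus> O(r\<^sup>2)\<close> (envelope theorem).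
  The map \<open>D \<mapsto> \<delta> C + (1 - \<delta>) dW (mX\<^sub>i) (mY\<^sub>j) D\<close> is a \<open>(1 - \<delta>)\<close>-contraction in the sup norm,
  so \<open>Cinf\<close> exists, is locally Lipschitz in \<open>(C, mX, mY)\<close>, and satisfies up to second order
  the linear relation \<open>dD = \<delta> dC + (1 - \<delta>) (F dmX + G dmY + P dD)\<close>. As \<open>P\<close> is
  row-stochastic, \<open>I - (1 - \<delta>) P\<close> is invertible, and solving for \<open>dD\<close> gives the derivative.\<close>

lemma xlogx_tangent_less:
  assumes p: "0 \<le> p" and q: "0 < q" and "p \<noteq> q"
  shows "xlogx q + (ln q + 1) * (p - q) < xlogx p"
proof (cases "p = 0")
  case True
  then show ?thesis using q by (simp add: xlogx_def algebra_simps)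
next
  case False
  with p have p: "0 < p" by simp
  have "ln (q / p) \<noteq> q / p - 1"
    using ln_eq_minus_one[of "q / p"] p q \<open>p \<noteq> q\<close> by auto
  then have "ln (q / p) < q / p - 1"
    using ln_le_minus_one[of "q / p"] p q by simp
  then have "0 < p * (q / p - 1 - ln (q / p))"
    using p by simp
  also have "\<dots> = xlogx p - (xlogx q + (ln q + 1) * (p - q))"
    using p q by (simp add: xlogx_def ln_div field_simps)
  finally show ?thesis by simp
qed

lemma xlogx_le_tangent_quadratic:
  assumes p: "0 \<le> p" and q: "0 < q"
  shows "xlogx p \<le> xlogx q + (ln q + 1) * (p - q) + (p - q)\<^sup>2 / q"
proof (cases "p = 0")
  case True
  then show ?thesis using q by (simp add: xlogx_def power2_eq_square field_simps)
next
  case False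
  with p have p: "0 < p" by simp
  have "p * ln (p / q) \<le> p * (p / q - 1)"
    using ln_le_minus_one[of "p / q"] p q by (intro mult_left_mono) auto
  moreover have "xlogx q + (ln q + 1) * (p - q) + (p - q)\<^sup>2 / q - xlogx p = p * (p / q - 1) - p * ln (p / q)"
    using p q by (simp add: xlogx_def ln_div power2_eq_square field_simps)
  ultimately show ?thesis by linarith
qed

text \<open>Fenchel--Young for \<open>\<epsilon> xlogx\<close>, whose convex conjugate is \<open>c \<mapsto> \<epsilon> exp (c / \<epsilon> - 1)\<close>.\<close>

lemma xlogx_fenchel_young_less:
  assumes e: "0 < \<epsilon>" and p: "0 \<le> p" and ne: "p \<noteq> exp (c / \<epsilon> - 1)"
  shows "- \<epsilon> * exp (c / \<epsilon> - 1) < \<epsilon> * xlogx p - c * p"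
proof -
  define q where "q = exp (c / \<epsilon> - 1)"
  have q: "0 < q" and lnq: "ln q + 1 = c / \<epsilon>" by (simp_all add: q_def)
  have "\<epsilon> * (xlogx q + (ln q + 1) * (p - q)) < \<epsilon> * xlogx p"
    using xlogx_tangent_less[OF p q] ne e unfolding q_def by simp
  moreover have "\<epsilon> * (xlogx q + (ln q + 1) * (p - q)) = - \<epsilon> * q + c * p"
    using e q unfolding lnq by (simp add: xlogx_def q_def field_simps)
  ultimately show ?thesis unfolding q_def by linarith
qed

lemma xlogx_fenchel_young_eq:
  assumes "0 < \<epsilon>"
  shows "\<epsilon> * xlogx (exp (c / \<epsilon> - 1)) - c * exp (c / \<epsilon> - 1) = - \<epsilon> * exp (c / \<epsilon> - 1)"
  using assms by (simp add: xlogx_def field_simps)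

lemma xlogx_fenchel_young:
  assumes "0 < \<epsilon>" and "0 \<le> p"
  shows "- \<epsilon> * exp (c / \<epsilon> - 1) \<le> \<epsilon> * xlogx p - c * p"
proof (cases "p = exp (c / \<epsilon> - 1)")
  case True
  then show ?thesis using xlogx_fenchel_young_eq[OF assms(1), of c] by simp
next
  case False
  then show ?thesis using xlogx_fenchel_young_less[OF assms False] by simp
qed

lemma sum_UNIV_prod:
  "(\<Sum>q\<in>(UNIV :: ('a::finite \<times> 'b::finite) set). h q) = (\<Sum>a\<in>UNIV. \<Sum>b\<in>UNIV. h (a, b))"
  using sum.cartesian_product'[of h UNIV UNIV] by simp

definition gibbs_plan :: "real \<Rightarrow> real^'y^'x \<Rightarrow> real^'x \<Rightarrow> real^'y \<Rightarrow> real^'y^'x" where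
  "gibbs_plan \<epsilon> D f g = (\<chi> k l. exp ((f$k + g$l - D$k$l) / \<epsilon> - 1))"

definition dual_value :: "real \<Rightarrow> real^'x \<Rightarrow> real^'y \<Rightarrow> real^'y^'x \<Rightarrow> real^'x \<Rightarrow> real^'y \<Rightarrow> real" where
  "dual_value \<epsilon> \<alpha> \<beta> D f g = (\<Sum>k\<in>UNIV. f$k * \<alpha>$k) + (\<Sum>l\<in>UNIV. g$l * \<beta>$l)
     - \<epsilon> * (\<Sum>k\<in>UNIV. \<Sum>l\<in>UNIV. gibbs_plan \<epsilon> D f g $k$l)"

lemma gibbs_plan_pos: "0 < gibbs_plan \<epsilon> D f g $k$l"
  by (simp add: gibbs_plan_def)

lemma lagrangian_eq_sum:
  "lagrangian \<epsilon> \<alpha> \<beta> D f g P =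
     (\<Sum>k\<in>UNIV. \<Sum>l\<in>UNIV. \<epsilon> * xlogx (P$k$l) - (f$k + g$l - D$k$l) * P$k$l)
     + (\<Sum>k\<in>UNIV. f$k * \<alpha>$k) + (\<Sum>l\<in>UNIV. g$l * \<beta>$l)"
proof -
  have "(\<Sum>l\<in>UNIV. g$l * ((\<Sum>k\<in>UNIV. P$k$l) - \<beta>$l)) =
      (\<Sum>k\<in>UNIV. \<Sum>l\<in>UNIV. g$l * P$k$l) - (\<Sum>l\<in>UNIV. g$l * \<beta>$l)"
    by (subst sum.swap) (simp add: right_diff_distrib sum_distrib_left sum_subtractf)
  then show ?thesis
    unfolding lagrangian_def ent_obj_def
    by (simp add: right_diff_distrib sum_distrib_left sum_subtractf sum.distrib algebra_simps)
qed

lemma dual_value_eq_sum: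
  "dual_value \<epsilon> \<alpha> \<beta> D f g =
     (\<Sum>k\<in>UNIV. \<Sum>l\<in>UNIV. - \<epsilon> * exp ((f$k + g$l - D$k$l) / \<epsilon> - 1))
     + (\<Sum>k\<in>UNIV. f$k * \<alpha>$k) + (\<Sum>l\<in>UNIV. g$l * \<beta>$l)"
  unfolding dual_value_def gibbs_plan_def by (simp add: sum_distrib_left sum_negf)

lemma dual_value_le_lagrangian:
  assumes "0 < \<epsilon>" and "\<forall>k l. 0 \<le> P$k$l"
  shows "dual_value \<epsilon> \<alpha> \<beta> D f g \<le> lagrangian \<epsilon> \<alpha> \<beta> D f g P"
proof -
  have "(\<Sum>k\<in>UNIV. \<Sum>l\<in>UNIV. - \<epsilon> * exp ((f$k + g$l - D$k$l) / \<epsilon> - 1))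
      \<le> (\<Sum>k\<in>UNIV. \<Sum>l\<in>UNIV. \<epsilon> * xlogx (P$k$l) - (f$k + g$l - D$k$l) * P$k$l)"
    using assms by (intro sum_mono xlogx_fenchel_young) auto
  then show ?thesis unfolding lagrangian_eq_sum dual_value_eq_sum by simp
qed

lemma dual_value_less_lagrangian:
  assumes e: "0 < \<epsilon>" and P: "\<forall>k l. 0 \<le> P$k$l" and ne: "P \<noteq> gibbs_plan \<epsilon> D f g"
  shows "dual_value \<epsilon> \<alpha> \<beta> D f g < lagrangian \<epsilon> \<alpha> \<beta> D f g P"
proof -
  obtain k0 l0 where "P$k0$l0 \<noteq> gibbs_plan \<epsilon> D f g $k0$l0"
    using ne by (metis vec_eq_iff)
  then have lt: "- \<epsilon> * exp ((f$k0 + g$l0 - D$k0$l0) / \<epsilon> - 1)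
      < \<epsilon> * xlogx (P$k0$l0) - (f$k0 + g$l0 - D$k0$l0) * P$k0$l0"
    using P by (intro xlogx_fenchel_young_less[OF e]) (auto simp: gibbs_plan_def)
  have le: "- \<epsilon> * exp ((f$k + g$l - D$k$l) / \<epsilon> - 1)
      \<le> \<epsilon> * xlogx (P$k$l) - (f$k + g$l - D$k$l) * P$k$l" for k l
    using P by (intro xlogx_fenchel_young[OF e]) auto
  have row_le: "(\<Sum>l\<in>UNIV. - \<epsilon> * exp ((f$k + g$l - D$k$l) / \<epsilon> - 1))
      \<le> (\<Sum>l\<in>UNIV. \<epsilon> * xlogx (P$k$l) - (f$k + g$l - D$k$l) * P$k$l)" for k
    by (intro sum_mono le)
  have "(\<Sum>l\<in>UNIV. - \<epsilon> * exp ((f$k0 + g$l - D$k0$l) / \<epsilon> - 1))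
      < (\<Sum>l\<in>UNIV. \<epsilon> * xlogx (P$k0$l) - (f$k0 + g$l - D$k0$l) * P$k0$l)"
    by (rule sum_strict_mono_ex1) (use le lt in auto)
  then have "(\<Sum>k\<in>UNIV. \<Sum>l\<in>UNIV. - \<epsilon> * exp ((f$k + g$l - D$k$l) / \<epsilon> - 1))
      < (\<Sum>k\<in>UNIV. \<Sum>l\<in>UNIV. \<epsilon> * xlogx (P$k$l) - (f$k + g$l - D$k$l) * P$k$l)"
    by (intro sum_strict_mono_ex1) (use row_le in auto)
  then show ?thesis unfolding lagrangian_eq_sum dual_value_eq_sum by simp
qed

lemma lagrangian_gibbs_plan:
  assumes "0 < \<epsilon>"
  shows "lagrangian \<epsilon> \<alpha> \<beta> D f g (gibbs_plan \<epsilon> D f g) = dual_value \<epsilon> \<alpha> \<beta> D f g"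
  unfolding lagrangian_eq_sum dual_value_eq_sum
  using xlogx_fenchel_young_eq[OF assms] by (simp add: gibbs_plan_def)

lemma dual_fun_eq_dual_value:
  assumes e: "0 < \<epsilon>"
  shows "dual_fun \<epsilon> \<alpha> \<beta> D f g = dual_value \<epsilon> \<alpha> \<beta> D f g"
  unfolding dual_fun_def
proof (rule cInf_eq_minimum)
  show "dual_value \<epsilon> \<alpha> \<beta> D f g \<in> {lagrangian \<epsilon> \<alpha> \<beta> D f g P |P. \<forall>k l. 0 \<le> P$k$l}"
    unfolding mem_Collect_eq
    by (rule exI[of _ "gibbs_plan \<epsilon> D f g"]) (simp add: lagrangian_gibbs_plan[OF e] gibbs_plan_pos less_imp_le)
qed (auto intro: dual_value_le_lagrangian[OF e])

lemma dual_value_transpose: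
  "dual_value \<epsilon> \<beta> \<alpha> (transpose D) g f = dual_value \<epsilon> \<alpha> \<beta> D f g"
  unfolding dual_value_def gibbs_plan_def transpose_def
  by (subst (2) sum.swap) (simp add: add.commute)

lemma is_dual_opt_transpose:
  assumes "0 < \<epsilon>"
  shows "is_dual_opt \<epsilon> \<beta> \<alpha> (transpose D) g f \<longleftrightarrow> is_dual_opt \<epsilon> \<alpha> \<beta> D f g"
  unfolding is_dual_opt_def dual_fun_eq_dual_value[OF assms] dual_value_transpose by blast

lemma dual_value_shift_row:
  assumes e: "0 < \<epsilon>"
  shows "dual_value \<epsilon> \<alpha> \<beta> D (\<chi> k'. f$k' + (if k' = k then t else 0)) g =
     dual_value \<epsilon> \<alpha> \<beta> D f g + t * \<alpha>$k - \<epsilon> * (exp (t / \<epsilon>) - 1) * (\<Sum>l\<in>UNIV. gibbs_plan \<epsilon> D f g $k$l)"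
proof -
  define G where "G = gibbs_plan \<epsilon> D f g"
  define c where "c = exp (t / \<epsilon>) - 1"
  have shift: "gibbs_plan \<epsilon> D (\<chi> k'. f$k' + (if k' = k then t else 0)) g $k'$l
      = G$k'$l + (if k' = k then c * G$k$l else 0)" for k' l
  proof (cases "k' = k")
    case True
    have "exp ((f$k + t + g$l - D$k$l) / \<epsilon> - 1) = exp (t / \<epsilon>) * exp ((f$k + g$l - D$k$l) / \<epsilon> - 1)"
      unfolding exp_add[symmetric] using e by (simp add: field_simps)
    then show ?thesis using True by (simp add: G_def c_def gibbs_plan_def algebra_simps)
  qed (simp add: G_def gibbs_plan_def)
  have "(\<Sum>k'\<in>UNIV. \<Sum>l\<in>UNIV. if k' = k then c * G$k$l else 0) = c * (\<Sum>l\<in>UNIV. G$k$l)"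
    by (subst sum.swap) (simp add: sum_distrib_left)
  then have mass: "(\<Sum>k'\<in>UNIV. \<Sum>l\<in>UNIV. gibbs_plan \<epsilon> D (\<chi> k'. f$k' + (if k' = k then t else 0)) g $k'$l)
      = (\<Sum>k'\<in>UNIV. \<Sum>l\<in>UNIV. G$k'$l) + c * (\<Sum>l\<in>UNIV. G$k$l)"
    unfolding shift by (simp add: sum.distrib)
  have "(\<Sum>k'\<in>UNIV. (f$k' + (if k' = k then t else 0)) * \<alpha>$k')
      = (\<Sum>k'\<in>UNIV. f$k' * \<alpha>$k' + (if k' = k then t * \<alpha>$k else 0))"
    by (intro sum.cong) (auto simp: distrib_right)
  then have lin: "(\<Sum>k'\<in>UNIV. (f$k' + (if k' = k then t else 0)) * \<alpha>$k') = (\<Sum>k'\<in>UNIV. f$k' * \<alpha>$k') + t * \<alpha>$k"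
    by (simp add: sum.distrib)
  show ?thesis
    unfolding dual_value_def vec_lambda_beta lin mass unfolding G_def c_def by (simp add: algebra_simps)
qed

text \<open>Stationarity of the concave dual in the potentials is exactly the marginal constraint on
  the Gibbs plan.\<close>

lemma gibbs_plan_row_sum:
  assumes e: "0 < \<epsilon>" and opt: "is_dual_opt \<epsilon> \<alpha> \<beta> D f g"
  shows "(\<Sum>l\<in>UNIV. gibbs_plan \<epsilon> D f g $k$l) = \<alpha>$k"
proof -
  define S where "S = (\<Sum>l\<in>UNIV. gibbs_plan \<epsilon> D f g $k$l)"
  define h where "h t = t * \<alpha>$k - \<epsilon> * (exp (t / \<epsilon>) - 1) * S" for t
  have "(h has_real_derivative (\<alpha>$k - S)) (at 0)"
    unfolding h_def using e by (auto intro!: derivative_eq_intros)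
  moreover have "h t \<le> h 0" for t
  proof -
    have "dual_value \<epsilon> \<alpha> \<beta> D (\<chi> k'. f$k' + (if k' = k then t else 0)) g \<le> dual_value \<epsilon> \<alpha> \<beta> D f g"
      using opt unfolding is_dual_opt_def dual_fun_eq_dual_value[OF e] by blast
    then show ?thesis unfolding dual_value_shift_row[OF e] h_def S_def by simp
  qed
  ultimately have "\<alpha>$k - S = 0" by (intro DERIV_local_max[of h _ 0 1]) auto
  then show ?thesis unfolding S_def by simp
qed

lemma gibbs_plan_col_sum:
  assumes e: "0 < \<epsilon>" and opt: "is_dual_opt \<epsilon> \<alpha> \<beta> D f g"
  shows "(\<Sum>k\<in>UNIV. gibbs_plan \<epsilon> D f g $k$l) = \<beta>$l"
proof -
  have "gibbs_plan \<epsilon> (transpose D) g f = transpose (gibbs_plan \<epsilon> D f g)"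
    by (simp add: gibbs_plan_def transpose_def add.commute)
  then show ?thesis
    using gibbs_plan_row_sum[OF e, of \<beta> \<alpha> "transpose D" g f l] opt
    unfolding is_dual_opt_transpose[OF e] by (simp add: transpose_def)
qed

lemma gibbs_plan_in_couplings:
  assumes "0 < \<epsilon>" and "is_dual_opt \<epsilon> \<alpha> \<beta> D f g"
  shows "gibbs_plan \<epsilon> D f g \<in> couplings \<alpha> \<beta>"
  unfolding couplings_def
  using gibbs_plan_row_sum[OF assms] gibbs_plan_col_sum[OF assms] gibbs_plan_pos less_imp_le
  by blast

lemma ent_obj_eq_lagrangian:
  "P \<in> couplings \<alpha> \<beta> \<Longrightarrow> ent_obj \<epsilon> D P = lagrangian \<epsilon> \<alpha> \<beta> D f g P"
  unfolding couplings_def lagrangian_def by simp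

lemma couplings_nonneg: "P \<in> couplings \<alpha> \<beta> \<Longrightarrow> 0 \<le> P$k$l"
  unfolding couplings_def by auto

lemma dual_value_le_ent_obj:
  assumes "0 < \<epsilon>" and "P \<in> couplings \<alpha> \<beta>"
  shows "dual_value \<epsilon> \<alpha> \<beta> D f g \<le> ent_obj \<epsilon> D P"
  using dual_value_le_lagrangian[OF assms(1)] couplings_nonneg[OF assms(2)]
    ent_obj_eq_lagrangian[OF assms(2)] by metis

lemma opt_plan_eq_gibbs_plan:
  assumes e: "0 < \<epsilon>" and dopt: "is_dual_opt \<epsilon> \<alpha> \<beta> D f g" and popt: "is_opt_plan \<epsilon> \<alpha> \<beta> D P"
  shows "P = gibbs_plan \<epsilon> D f g"
proof (rule ccontr)
  assume ne: "P \<noteq> gibbs_plan \<epsilon> D f g"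
  have P: "P \<in> couplings \<alpha> \<beta>" and G: "gibbs_plan \<epsilon> D f g \<in> couplings \<alpha> \<beta>"
    using popt gibbs_plan_in_couplings[OF e dopt] by (auto simp: is_opt_plan_def)
  have "dual_value \<epsilon> \<alpha> \<beta> D f g < ent_obj \<epsilon> D P"
    using dual_value_less_lagrangian[OF e _ ne] couplings_nonneg[OF P] ent_obj_eq_lagrangian[OF P] by metis
  also have "\<dots> \<le> ent_obj \<epsilon> D (gibbs_plan \<epsilon> D f g)"
    using popt G unfolding is_opt_plan_def by blast
  also have "\<dots> = dual_value \<epsilon> \<alpha> \<beta> D f g"
    using ent_obj_eq_lagrangian[OF G] lagrangian_gibbs_plan[OF e] by metis
  finally show False by simp
qed

definition prob_vector :: "real^'a \<Rightarrow> bool" where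
  "prob_vector \<alpha> \<longleftrightarrow> (\<forall>k. 0 \<le> \<alpha>$k) \<and> (\<Sum>k\<in>UNIV. \<alpha>$k) = 1"

lemma row_stochastic_prob_vector: "row_stochastic M \<Longrightarrow> prob_vector (M$i)"
  unfolding row_stochastic_def prob_vector_def by auto

lemma prob_vector_le_1:
  assumes "prob_vector \<alpha>"
  shows "\<alpha>$k \<le> 1"
proof -
  have "\<alpha>$k \<le> (\<Sum>k\<in>UNIV. \<alpha>$k)"
    using assms unfolding prob_vector_def by (intro member_le_sum) auto
  then show ?thesis using assms unfolding prob_vector_def by simp
qed

lemma product_in_couplings:
  "prob_vector \<alpha> \<Longrightarrow> prob_vector \<beta> \<Longrightarrow> (\<chi> k l. \<alpha>$k * \<beta>$l) \<in> couplings \<alpha> \<beta>"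
  unfolding couplings_def prob_vector_def
  by (auto simp: sum_distrib_left[symmetric] sum_distrib_right[symmetric])

lemma couplings_total_mass:
  "P \<in> couplings \<alpha> \<beta> \<Longrightarrow> prob_vector \<alpha> \<Longrightarrow> (\<Sum>k\<in>UNIV. \<Sum>l\<in>UNIV. P$k$l) = 1"
  unfolding couplings_def prob_vector_def by auto

lemma ent_obj_bdd_below:
  assumes "0 < \<epsilon>"
  shows "bdd_below (ent_obj \<epsilon> D ` couplings \<alpha> \<beta>)"
  by (rule bdd_belowI2) (rule dual_value_le_ent_obj[OF assms, of _ _ _ _ 0 0])

lemma dW_le_ent_obj:
  "0 < \<epsilon> \<Longrightarrow> P \<in> couplings \<alpha> \<beta> \<Longrightarrow> dW \<epsilon> \<alpha> \<beta> D \<le> ent_obj \<epsilon> D P"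
  unfolding dW_def by (rule cInf_lower) (auto intro: ent_obj_bdd_below)

lemma le_dW:
  assumes "prob_vector \<alpha>" "prob_vector \<beta>" and "\<And>P. P \<in> couplings \<alpha> \<beta> \<Longrightarrow> b \<le> ent_obj \<epsilon> D P"
  shows "b \<le> dW \<epsilon> \<alpha> \<beta> D"
  unfolding dW_def by (rule cInf_greatest) (use product_in_couplings[OF assms(1,2)] assms(3) in auto)

lemma dual_value_le_dW:
  "0 < \<epsilon> \<Longrightarrow> prob_vector \<alpha> \<Longrightarrow> prob_vector \<beta> \<Longrightarrow> dual_value \<epsilon> \<alpha> \<beta> D f g \<le> dW \<epsilon> \<alpha> \<beta> D"
  by (intro le_dW dual_value_le_ent_obj)

lemma dW_eq_ent_obj:
  assumes "0 < \<epsilon>" "prob_vector \<alpha>" "prob_vector \<beta>" and "is_opt_plan \<epsilon> \<alpha> \<beta> D P"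
  shows "dW \<epsilon> \<alpha> \<beta> D = ent_obj \<epsilon> D P"
  using assms dW_le_ent_obj le_dW[OF assms(2,3)] unfolding is_opt_plan_def by (metis order_antisym)

lemma dW_eq_dual_value:
  assumes e: "0 < \<epsilon>" and "prob_vector \<alpha>" "prob_vector \<beta>"
    and dopt: "is_dual_opt \<epsilon> \<alpha> \<beta> D f g" and popt: "is_opt_plan \<epsilon> \<alpha> \<beta> D P"
  shows "dW \<epsilon> \<alpha> \<beta> D = dual_value \<epsilon> \<alpha> \<beta> D f g"
proof -
  have "P \<in> couplings \<alpha> \<beta>" using popt unfolding is_opt_plan_def by simp
  then show ?thesis
    using dW_eq_ent_obj[OF assms(1-3) popt] ent_obj_eq_lagrangian lagrangian_gibbs_plan[OF e]
      opt_plan_eq_gibbs_plan[OF e dopt popt] by metis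
qed

lemma ent_obj_le_shift_cost:
  assumes P: "P \<in> couplings \<alpha> \<beta>" and "prob_vector \<alpha>" and r: "\<forall>k l. \<bar>D$k$l - D'$k$l\<bar> \<le> r"
  shows "ent_obj \<epsilon> D P \<le> ent_obj \<epsilon> D' P + r"
proof -
  have "(\<Sum>k\<in>UNIV. \<Sum>l\<in>UNIV. P$k$l * D$k$l) \<le> (\<Sum>k\<in>UNIV. \<Sum>l\<in>UNIV. P$k$l * D'$k$l + P$k$l * r)"
  proof (intro sum_mono)
    fix k l
    have "P$k$l * (D$k$l - D'$k$l) \<le> P$k$l * r"
      using couplings_nonneg[OF P] r by (intro mult_left_mono) (auto simp: abs_le_iff)
    then show "P$k$l * D$k$l \<le> P$k$l * D'$k$l + P$k$l * r" by (simp add: algebra_simps)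
  qed
  also have "\<dots> = (\<Sum>k\<in>UNIV. \<Sum>l\<in>UNIV. P$k$l * D'$k$l) + r"
    using couplings_total_mass[OF assms(1,2)] by (simp add: sum.distrib sum_distrib_right[symmetric])
  finally show ?thesis unfolding ent_obj_def by simp
qed

lemma dW_cost_lipschitz:
  assumes e: "0 < \<epsilon>" and a: "prob_vector \<alpha>" and b: "prob_vector \<beta>"
    and r: "\<forall>k l. \<bar>D$k$l - D'$k$l\<bar> \<le> r"
  shows "\<bar>dW \<epsilon> \<alpha> \<beta> D - dW \<epsilon> \<alpha> \<beta> D'\<bar> \<le> r"
proof -
  have "dW \<epsilon> \<alpha> \<beta> D - r \<le> dW \<epsilon> \<alpha> \<beta> D'" if "\<forall>k l. \<bar>D$k$l - D'$k$l\<bar> \<le> r" for D D'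
  proof (rule le_dW[OF a b])
    fix P assume P: "P \<in> couplings \<alpha> \<beta>"
    show "dW \<epsilon> \<alpha> \<beta> D - r \<le> ent_obj \<epsilon> D' P"
      using dW_le_ent_obj[OF e P, of D] ent_obj_le_shift_cost[OF P a that, of \<epsilon>] by linarith
  qed
  from this[OF r] this[of D' D] r show ?thesis by (simp add: abs_minus_commute abs_le_iff)
qed

definition flatten :: "'a^'c^'b \<Rightarrow> 'a^('b \<times> 'c)" where
  "flatten M = (\<chi> q. M $ fst q $ snd q)"

lemma flatten_nth [simp]: "flatten M $ (i, j) = M $ i $ j"
  by (simp add: flatten_def)

lemma flatten_diff: "flatten (M - N) = flatten M - flatten N"
  by (simp add: flatten_def vec_eq_iff)

lemma norm_flatten: "norm (flatten (M :: real^'c^'b)) = norm M"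
  by (simp add: norm_vec_def L2_set_def sum_UNIV_prod flatten_def real_sqrt_pow2 sum_nonneg)

lemma abs_nth_le_norm: "\<bar>M$i$j\<bar> \<le> norm (M :: real^'c^'b)"
  using component_le_norm_cart[of "flatten M" "(i, j)"] by (simp add: norm_flatten)

lemma norm_le_card_mult_bound:
  fixes v :: "real^'n"
  assumes "\<forall>i. \<bar>v$i\<bar> \<le> b"
  shows "norm v \<le> real CARD('n) * b"
  using norm_le_l1_cart[of v] sum_bounded_above[of UNIV "\<lambda>i. \<bar>v$i\<bar>" b] assms by simp

lemma norm_matrix_le_card_mult_bound:
  fixes M :: "real^'c^'b"
  assumes "\<forall>i j. \<bar>M$i$j\<bar> \<le> b"
  shows "norm M \<le> real CARD('b) * real CARD('c) * b"
proof -
  have "\<forall>q. \<bar>flatten M $ q\<bar> \<le> b" using assms by (simp add: flatten_def)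
  then have "norm (flatten M) \<le> real CARD('b \<times> 'c) * b" by (rule norm_le_card_mult_bound)
  then show ?thesis
    by (simp add: norm_flatten card_cartesian_product[of UNIV UNIV, unfolded UNIV_Times_UNIV])
qed

definition fixed_cost_map :: "real \<Rightarrow> real \<Rightarrow> real^'y^'x \<Rightarrow> real^'x^'x \<Rightarrow> real^'y^'y \<Rightarrow> real^'y^'x \<Rightarrow> real^'y^'x" where
  "fixed_cost_map \<delta> \<epsilon> C mX mY D = (\<chi> i j. \<delta> * C$i$j + (1 - \<delta>) * dW \<epsilon> (mX$i) (mY$j) D)"

lemma is_fixed_cost_iff: "is_fixed_cost \<delta> \<epsilon> C mX mY D \<longleftrightarrow> fixed_cost_map \<delta> \<epsilon> C mX mY D = D"
  unfolding is_fixed_cost_def fixed_cost_map_def vec_eq_iff by (auto simp: eq_commute)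

lemma fixed_cost_map_contraction:
  assumes e: "0 < \<epsilon>" and d: "\<delta> \<le> 1" and X: "row_stochastic mX" and Y: "row_stochastic mY"
    and r: "\<forall>k l. \<bar>D$k$l - D'$k$l\<bar> \<le> r"
  shows "\<forall>i j. \<bar>fixed_cost_map \<delta> \<epsilon> C mX mY D $i$j - fixed_cost_map \<delta> \<epsilon> C mX mY D' $i$j\<bar> \<le> (1 - \<delta>) * r"
proof (intro allI)
  fix i j
  have "\<bar>dW \<epsilon> (mX$i) (mY$j) D - dW \<epsilon> (mX$i) (mY$j) D'\<bar> \<le> r"
    using dW_cost_lipschitz[OF e row_stochastic_prob_vector[OF X] row_stochastic_prob_vector[OF Y] r] .
  then have "\<bar>(1 - \<delta>) * (dW \<epsilon> (mX$i) (mY$j) D - dW \<epsilon> (mX$i) (mY$j) D')\<bar> \<le> (1 - \<delta>) * r"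
    using d by (simp add: abs_mult mult_left_mono)
  then show "\<bar>fixed_cost_map \<delta> \<epsilon> C mX mY D $i$j - fixed_cost_map \<delta> \<epsilon> C mX mY D' $i$j\<bar> \<le> (1 - \<delta>) * r"
    unfolding fixed_cost_map_def by (simp add: algebra_simps)
qed

lemma fixed_cost_map_funpow_contraction:
  assumes "0 < \<epsilon>" and "\<delta> \<le> 1" and "row_stochastic mX" and "row_stochastic mY"
    and "\<forall>k l. \<bar>D$k$l - D'$k$l\<bar> \<le> r"
  shows "\<forall>i j. \<bar>(fixed_cost_map \<delta> \<epsilon> C mX mY ^^ n) D $i$j - (fixed_cost_map \<delta> \<epsilon> C mX mY ^^ n) D' $i$j\<bar>
           \<le> (1 - \<delta>)^n * r"
proof (induction n)
  case (Suc n)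
  show ?case using fixed_cost_map_contraction[OF assms(1-4) Suc.IH] by (simp add: mult.assoc)
qed (use assms(5) in simp)

text \<open>The map contracts only in the sup norm; a high enough iterate also contracts in the
  Euclidean norm, to which Banach's theorem is applied.\<close>

lemma ex1_fixed_cost:
  fixes C :: "real^'y^'x" and mX :: "real^'x^'x" and mY :: "real^'y^'y"
  assumes e: "0 < \<epsilon>" and d0: "0 < \<delta>" and d: "\<delta> \<le> 1"
    and X: "row_stochastic mX" and Y: "row_stochastic mY"
  shows "\<exists>!D. is_fixed_cost \<delta> \<epsilon> C mX mY D"
proof -
  let ?T = "fixed_cost_map \<delta> \<epsilon> C mX mY"
  define K where "K = real CARD('x) * real CARD('y)"
  have K: "K > 0" unfolding K_def by (simp add: card_gt_0_iff)
  obtain N where N: "(1 - \<delta>)^N < 1 / K"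
    using real_arch_pow_inv[of "1 / K" "1 - \<delta>"] K d0 by auto
  have "dist ((?T ^^ N) D) ((?T ^^ N) D') \<le> (K * (1 - \<delta>)^N) * dist D D'" for D D'
  proof -
    have "\<forall>k l. \<bar>D$k$l - D'$k$l\<bar> \<le> dist D D'"
      using abs_nth_le_norm[of "D - D'"] by (simp add: dist_norm)
    from fixed_cost_map_funpow_contraction[OF e d X Y this, where C=C and n=N]
    have "norm ((?T ^^ N) D - (?T ^^ N) D') \<le> K * ((1 - \<delta>)^N * dist D D')"
      unfolding K_def by (intro norm_matrix_le_card_mult_bound) simp
    then show ?thesis by (simp add: dist_norm mult.assoc)
  qed
  moreover have "K * (1 - \<delta>)^N < 1" using N K by (simp add: field_simps)
  ultimately have "\<exists>!D. (?T ^^ N) D = D"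
    using banach_fix_type[of "K * (1 - \<delta>)^N" "?T ^^ N"] K d by auto
  then obtain D where D: "(?T ^^ N) D = D" and uniq: "\<And>D'. (?T ^^ N) D' = D' \<Longrightarrow> D' = D"
    by blast
  have "(?T ^^ N) (?T D) = ?T D" using D by (metis funpow_swap1)
  then have "?T D = D" using uniq by blast
  moreover have "(?T ^^ n) D' = D'" if "?T D' = D'" for D' n
    using that by (induction n) auto
  ultimately show ?thesis unfolding is_fixed_cost_iff using uniq by blast
qed

lemma Cinf_eq:
  assumes "0 < \<epsilon>" and "0 < \<delta>" and "\<delta> \<le> 1" and "row_stochastic mX" and "row_stochastic mY"
  shows "Cinf \<delta> \<epsilon> C mX mY $i$j = \<delta> * C$i$j + (1 - \<delta>) * dW \<epsilon> (mX$i) (mY$j) (Cinf \<delta> \<epsilon> C mX mY)"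
proof -
  have "is_fixed_cost \<delta> \<epsilon> C mX mY (Cinf \<delta> \<epsilon> C mX mY)"
    unfolding Cinf_def by (rule theI'[OF ex1_fixed_cost[OF assms]])
  then show ?thesis unfolding is_fixed_cost_def by blast
qed

lemma exp_le_quadratic:
  fixes u :: real
  assumes "\<bar>u\<bar> \<le> 1"
  shows "exp u \<le> 1 + u + 3 * u\<^sup>2"
proof -
  have "norm (exp u - (\<Sum>i\<le>1. u ^ i / fact i)) \<le> exp (norm u) * (norm u ^ Suc 1) / fact 1"
    by (rule Taylor_exp_field)
  then have taylor: "\<bar>exp u - (1 + u)\<bar> \<le> exp \<bar>u\<bar> * u\<^sup>2"
    by (simp add: numeral_2_eq_2)
  have "exp \<bar>u\<bar> \<le> exp 1" using assms by simp
  also have "\<dots> \<le> 3" using e_less_272 by simp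
  finally have "exp \<bar>u\<bar> \<le> 3" .
  then have "exp \<bar>u\<bar> * u\<^sup>2 \<le> 3 * u\<^sup>2" by (intro mult_right_mono) auto
  then show ?thesis using taylor by (simp add: abs_le_iff)
qed

lemma exp_shift_le:
  fixes c d \<epsilon> :: real
  assumes e: "0 < \<epsilon>" and d: "\<bar>d\<bar> \<le> \<epsilon>"
  shows "\<epsilon> * exp ((c - d) / \<epsilon> - 1) \<le> (\<epsilon> - d + 3 * d\<^sup>2 / \<epsilon>) * exp (c / \<epsilon> - 1)"
proof -
  have "\<bar>- d / \<epsilon>\<bar> \<le> 1" using d e by (simp add: abs_divide)
  then have "\<epsilon> * exp (- d / \<epsilon>) \<le> \<epsilon> * (1 + - d / \<epsilon> + 3 * (- d / \<epsilon>)\<^sup>2)"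
    using e by (intro mult_left_mono exp_le_quadratic) auto
  also have "\<dots> = \<epsilon> - d + 3 * d\<^sup>2 / \<epsilon>"
    using e by (simp add: power2_eq_square field_simps)
  finally have "\<epsilon> * exp (- d / \<epsilon>) * exp (c / \<epsilon> - 1) \<le> (\<epsilon> - d + 3 * d\<^sup>2 / \<epsilon>) * exp (c / \<epsilon> - 1)"
    by (intro mult_right_mono) auto
  moreover have "exp ((c - d) / \<epsilon> - 1) = exp (- d / \<epsilon>) * exp (c / \<epsilon> - 1)"
    unfolding exp_add[symmetric] by (simp add: diff_divide_distrib)
  ultimately show ?thesis by (simp add: mult.assoc)
qed

lemma entropic_term_perturb_le:
  assumes p: "0 < p" and pe: "0 \<le> p + e" and e: "\<bar>e\<bar> \<le> 2 * r" and d: "\<bar>d\<bar> \<le> r" and eps: "0 \<le> \<epsilon>"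
  shows "(p + e) * (x + d) + \<epsilon> * xlogx (p + e)
     \<le> p * x + \<epsilon> * xlogx p + p * d + (x + \<epsilon> * (ln p + 1)) * e + (2 + 4 * \<epsilon> / p) * r\<^sup>2"
proof -
  have "e\<^sup>2 \<le> (2 * r)\<^sup>2" using e by (metis abs_ge_zero power2_abs power_mono)
  then have "e\<^sup>2 / p \<le> 4 * r\<^sup>2 / p" using p by (simp add: divide_right_mono power_mult_distrib)
  then have "\<epsilon> * xlogx (p + e) \<le> \<epsilon> * (xlogx p + (ln p + 1) * e + 4 * r\<^sup>2 / p)"
    using xlogx_le_tangent_quadratic[OF pe p] eps by (intro mult_left_mono) auto
  moreover have "e * d \<le> 2 * r\<^sup>2"
  proof -
    have "\<bar>e\<bar> * \<bar>d\<bar> \<le> (2 * r) * r" using e d by (intro mult_mono) auto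
    moreover have "e * d \<le> \<bar>e\<bar> * \<bar>d\<bar>" by (simp add: abs_mult[symmetric])
    ultimately show ?thesis by (simp add: power2_eq_square)
  qed
  ultimately show ?thesis by (simp add: algebra_simps power2_eq_square)
qed

text \<open>Envelope theorem: the potentials and the optimal plan are the partial derivatives of
  \<open>dW\<close> in the two marginals and in the cost.\<close>

definition dW_linearization :: "real^'y^'x \<Rightarrow> real^'x \<Rightarrow> real^'y \<Rightarrow> real^'x \<Rightarrow> real^'x \<Rightarrow> real^'y \<Rightarrow> real^'y
    \<Rightarrow> real^'y^'x \<Rightarrow> real^'y^'x \<Rightarrow> real" where
  "dW_linearization P f g \<alpha> \<alpha>' \<beta> \<beta>' D D' = (\<Sum>k\<in>UNIV. f$k * (\<alpha>'$k - \<alpha>$k)) + (\<Sum>l\<in>UNIV. g$l * (\<beta>'$l - \<beta>$l))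
      + (\<Sum>k\<in>UNIV. \<Sum>l\<in>UNIV. P$k$l * (D'$k$l - D$k$l))"

text \<open>The lower bound evaluates the dual of the perturbed problem at the unperturbed potentials.\<close>

lemma dW_lower_expansion:
  assumes e: "0 < \<epsilon>" and a: "prob_vector \<alpha>" and b: "prob_vector \<beta>"
    and dopt: "is_dual_opt \<epsilon> \<alpha> \<beta> D f g" and popt: "is_opt_plan \<epsilon> \<alpha> \<beta> D P"
    and a': "prob_vector \<alpha>'" and b': "prob_vector \<beta>'" and re: "r \<le> \<epsilon>"
    and rD: "\<forall>k l. \<bar>D'$k$l - D$k$l\<bar> \<le> r"
  shows "dW \<epsilon> \<alpha> \<beta> D + dW_linearization P f g \<alpha> \<alpha>' \<beta> \<beta>' D D' - 3 * r\<^sup>2 / \<epsilon> \<le> dW \<epsilon> \<alpha>' \<beta>' D'"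
proof -
  have P: "P = gibbs_plan \<epsilon> D f g" by (rule opt_plan_eq_gibbs_plan[OF e dopt popt])
  have Pc: "P \<in> couplings \<alpha> \<beta>" using popt unfolding is_opt_plan_def by simp
  have entry: "\<epsilon> * exp ((f$k + g$l - D'$k$l) / \<epsilon> - 1)
      \<le> \<epsilon> * P$k$l - P$k$l * (D'$k$l - D$k$l) + 3 * r\<^sup>2 / \<epsilon> * P$k$l" for k l
  proof -
    have d: "\<bar>D'$k$l - D$k$l\<bar> \<le> r" using rD by blast
    then have "(D'$k$l - D$k$l)\<^sup>2 \<le> r\<^sup>2" by (metis abs_ge_zero power2_abs power_mono)
    then have "3 * (D'$k$l - D$k$l)\<^sup>2 / \<epsilon> * P$k$l \<le> 3 * r\<^sup>2 / \<epsilon> * P$k$l"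
      using e couplings_nonneg[OF Pc] by (intro mult_right_mono divide_right_mono) auto
    moreover have "\<epsilon> * exp ((f$k + g$l - D'$k$l) / \<epsilon> - 1)
        \<le> (\<epsilon> - (D'$k$l - D$k$l) + 3 * (D'$k$l - D$k$l)\<^sup>2 / \<epsilon>) * P$k$l"
      using exp_shift_le[OF e, of "D'$k$l - D$k$l" "f$k + g$l - D$k$l"] d re
      unfolding P by (simp add: gibbs_plan_def algebra_simps)
    ultimately show ?thesis by (simp add: algebra_simps)
  qed
  have "\<epsilon> * (\<Sum>k\<in>UNIV. \<Sum>l\<in>UNIV. gibbs_plan \<epsilon> D' f g $k$l)
      \<le> (\<Sum>k\<in>UNIV. \<Sum>l\<in>UNIV. \<epsilon> * P$k$l - P$k$l * (D'$k$l - D$k$l) + 3 * r\<^sup>2 / \<epsilon> * P$k$l)"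
    unfolding sum_distrib_left gibbs_plan_def vec_lambda_beta by (intro sum_mono entry)
  also have "\<dots> = \<epsilon> * (\<Sum>k\<in>UNIV. \<Sum>l\<in>UNIV. P$k$l) - (\<Sum>k\<in>UNIV. \<Sum>l\<in>UNIV. P$k$l * (D'$k$l - D$k$l))
      + 3 * r\<^sup>2 / \<epsilon> * (\<Sum>k\<in>UNIV. \<Sum>l\<in>UNIV. P$k$l)"
    by (simp add: sum.distrib sum_subtractf sum_distrib_left)
  also have "\<dots> = \<epsilon> * (\<Sum>k\<in>UNIV. \<Sum>l\<in>UNIV. P$k$l) - (\<Sum>k\<in>UNIV. \<Sum>l\<in>UNIV. P$k$l * (D'$k$l - D$k$l))
      + 3 * r\<^sup>2 / \<epsilon>"
    using couplings_total_mass[OF Pc a] by simp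
  finally have "dW \<epsilon> \<alpha> \<beta> D + dW_linearization P f g \<alpha> \<alpha>' \<beta> \<beta>' D D' - 3 * r\<^sup>2 / \<epsilon> \<le> dual_value \<epsilon> \<alpha>' \<beta>' D' f g"
    unfolding dW_eq_dual_value[OF e a b dopt popt] dW_linearization_def dual_value_def P
    by (simp add: right_diff_distrib sum_subtractf)
  also have "\<dots> \<le> dW \<epsilon> \<alpha>' \<beta>' D'" by (rule dual_value_le_dW[OF e a' b'])
  finally show ?thesis .
qed

text \<open>For the upper bound, this rank-two correction moves the optimal plan to a coupling of the
  perturbed marginals.\<close>

definition marginal_shift :: "real^'x \<Rightarrow> real^'x \<Rightarrow> real^'y \<Rightarrow> real^'y \<Rightarrow> real^'y^'x" where
  "marginal_shift \<alpha> \<alpha>' \<beta> \<beta>' = (\<chi> k l. (\<alpha>'$k - \<alpha>$k) * \<beta>$l + \<alpha>$k * (\<beta>'$l - \<beta>$l))"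

lemma marginal_shift_row_sum:
  "prob_vector \<beta> \<Longrightarrow> prob_vector \<beta>' \<Longrightarrow> (\<Sum>l\<in>UNIV. marginal_shift \<alpha> \<alpha>' \<beta> \<beta>' $k$l) = \<alpha>'$k - \<alpha>$k"
  unfolding marginal_shift_def prob_vector_def
  by (simp add: sum.distrib sum_distrib_left[symmetric] sum_subtractf)

lemma marginal_shift_col_sum:
  "prob_vector \<alpha> \<Longrightarrow> prob_vector \<alpha>' \<Longrightarrow> (\<Sum>k\<in>UNIV. marginal_shift \<alpha> \<alpha>' \<beta> \<beta>' $k$l) = \<beta>'$l - \<beta>$l"
  unfolding marginal_shift_def prob_vector_def
  by (simp add: sum.distrib sum_distrib_right[symmetric] sum_subtractf)

lemma abs_marginal_shift_le:
  assumes "prob_vector \<alpha>" "prob_vector \<beta>"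
    and "\<forall>k. \<bar>\<alpha>'$k - \<alpha>$k\<bar> \<le> r" and "\<forall>l. \<bar>\<beta>'$l - \<beta>$l\<bar> \<le> r"
  shows "\<bar>marginal_shift \<alpha> \<alpha>' \<beta> \<beta>' $k$l\<bar> \<le> 2 * r"
proof -
  have "0 \<le> \<alpha>$k" "\<alpha>$k \<le> 1" "0 \<le> \<beta>$l" "\<beta>$l \<le> 1"
    using assms(1,2) prob_vector_le_1 unfolding prob_vector_def by auto
  moreover have "0 \<le> r" using assms(3) abs_ge_zero order_trans by blast
  ultimately have "\<bar>\<alpha>'$k - \<alpha>$k\<bar> * \<bar>\<beta>$l\<bar> \<le> r * 1" and "\<bar>\<alpha>$k\<bar> * \<bar>\<beta>'$l - \<beta>$l\<bar> \<le> 1 * r"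
    using assms(3,4) by (intro mult_mono; simp)+
  then show ?thesis unfolding marginal_shift_def by (simp add: abs_mult[symmetric])
qed

lemma plus_marginal_shift_in_couplings:
  assumes P: "P \<in> couplings \<alpha> \<beta>" and "prob_vector \<alpha>" "prob_vector \<beta>" "prob_vector \<alpha>'" "prob_vector \<beta>'"
    and nonneg: "\<forall>k l. 0 \<le> P$k$l + marginal_shift \<alpha> \<alpha>' \<beta> \<beta>' $k$l"
  shows "P + marginal_shift \<alpha> \<alpha>' \<beta> \<beta>' \<in> couplings \<alpha>' \<beta>'"
  unfolding couplings_def
proof (intro CollectI conjI allI)
  show "0 \<le> (P + marginal_shift \<alpha> \<alpha>' \<beta> \<beta>')$k$l" for k l using nonneg by simp
  show "(\<Sum>l\<in>UNIV. (P + marginal_shift \<alpha> \<alpha>' \<beta> \<beta>')$k$l) = \<alpha>'$k" for k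
    using P marginal_shift_row_sum[OF assms(3,5), of \<alpha> \<alpha>' k] unfolding couplings_def by (simp add: sum.distrib)
  show "(\<Sum>k\<in>UNIV. (P + marginal_shift \<alpha> \<alpha>' \<beta> \<beta>')$k$l) = \<beta>'$l" for l
    using P marginal_shift_col_sum[OF assms(2,4), of \<beta> \<beta>' l] unfolding couplings_def by (simp add: sum.distrib)
qed

lemma sum_potentials_mult_marginal_shift:
  assumes "prob_vector \<alpha>" "prob_vector \<beta>" "prob_vector \<alpha>'" "prob_vector \<beta>'"
  shows "(\<Sum>k\<in>UNIV. \<Sum>l\<in>UNIV. (f$k + g$l) * marginal_shift \<alpha> \<alpha>' \<beta> \<beta>' $k$l)
    = (\<Sum>k\<in>UNIV. f$k * (\<alpha>'$k - \<alpha>$k)) + (\<Sum>l\<in>UNIV. g$l * (\<beta>'$l - \<beta>$l))"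
proof -
  let ?E = "marginal_shift \<alpha> \<alpha>' \<beta> \<beta>'"
  have "(\<Sum>k\<in>UNIV. \<Sum>l\<in>UNIV. (f$k + g$l) * ?E$k$l)
      = (\<Sum>k\<in>UNIV. \<Sum>l\<in>UNIV. f$k * ?E$k$l) + (\<Sum>l\<in>UNIV. \<Sum>k\<in>UNIV. g$l * ?E$k$l)"
    by (simp add: distrib_right sum.distrib sum.swap[of "\<lambda>k l. g$l * ?E$k$l"])
  also have "\<dots> = (\<Sum>k\<in>UNIV. f$k * (\<Sum>l\<in>UNIV. ?E$k$l)) + (\<Sum>l\<in>UNIV. g$l * (\<Sum>k\<in>UNIV. ?E$k$l))"
    by (simp add: sum_distrib_left)
  finally show ?thesis
    unfolding marginal_shift_row_sum[OF assms(2,4)] marginal_shift_col_sum[OF assms(1,3)] .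
qed

lemma dW_upper_expansion:
  assumes e: "0 < \<epsilon>" and a: "prob_vector \<alpha>" and b: "prob_vector \<beta>"
    and dopt: "is_dual_opt \<epsilon> \<alpha> \<beta> D f g" and popt: "is_opt_plan \<epsilon> \<alpha> \<beta> D P"
    and a': "prob_vector \<alpha>'" and b': "prob_vector \<beta>'"
    and rP: "\<forall>k l. 2 * r \<le> P$k$l" and rD: "\<forall>k l. \<bar>D'$k$l - D$k$l\<bar> \<le> r"
    and ra: "\<forall>k. \<bar>\<alpha>'$k - \<alpha>$k\<bar> \<le> r" and rb: "\<forall>l. \<bar>\<beta>'$l - \<beta>$l\<bar> \<le> r"
  shows "dW \<epsilon> \<alpha>' \<beta>' D' \<le> dW \<epsilon> \<alpha> \<beta> D + dW_linearization P f g \<alpha> \<alpha>' \<beta> \<beta>' D D'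
      + (\<Sum>k\<in>UNIV. \<Sum>l\<in>UNIV. 2 + 4 * \<epsilon> / P$k$l) * r\<^sup>2"
proof -
  define E where "E = marginal_shift \<alpha> \<alpha>' \<beta> \<beta>'"
  have Pc: "P \<in> couplings \<alpha> \<beta>" using popt unfolding is_opt_plan_def by simp
  have Ppos: "0 < P$k$l" for k l
    using opt_plan_eq_gibbs_plan[OF e dopt popt] gibbs_plan_pos by metis
  have lnP: "\<epsilon> * (ln (P$k$l) + 1) = f$k + g$l - D$k$l" for k l
    using e opt_plan_eq_gibbs_plan[OF e dopt popt] by (simp add: gibbs_plan_def field_simps)
  have E: "\<bar>E$k$l\<bar> \<le> 2 * r" for k l
    unfolding E_def using abs_marginal_shift_le[OF a b ra rb] .
  have PE: "0 \<le> P$k$l + E$k$l" for k l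
    using E[of k l] rP[rule_format, of k l] by (simp add: abs_le_iff)
  have PEc: "P + E \<in> couplings \<alpha>' \<beta>'"
    unfolding E_def using PE by (intro plus_marginal_shift_in_couplings[OF Pc a b a' b']) (simp add: E_def)
  have entry: "(P$k$l + E$k$l) * (D$k$l + (D'$k$l - D$k$l)) + \<epsilon> * xlogx (P$k$l + E$k$l)
      \<le> P$k$l * D$k$l + \<epsilon> * xlogx (P$k$l) + P$k$l * (D'$k$l - D$k$l) + (f$k + g$l) * E$k$l
        + (2 + 4 * \<epsilon> / P$k$l) * r\<^sup>2" for k l
  proof -
    have "\<bar>D'$k$l - D$k$l\<bar> \<le> r" using rD by blast
    from entropic_term_perturb_le[OF Ppos[of k l] PE[of k l] E[of k l] this, where \<epsilon>=\<epsilon> and x="D$k$l"] e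
    show ?thesis unfolding lnP by (simp add: algebra_simps)
  qed
  have "dW \<epsilon> \<alpha>' \<beta>' D' \<le> ent_obj \<epsilon> D' (P + E)" by (rule dW_le_ent_obj[OF e PEc])
  also have "\<dots> = (\<Sum>k\<in>UNIV. \<Sum>l\<in>UNIV. (P$k$l + E$k$l) * (D$k$l + (D'$k$l - D$k$l))
      + \<epsilon> * xlogx (P$k$l + E$k$l))"
    unfolding ent_obj_def by (simp add: sum.distrib sum_distrib_left)
  also have "\<dots> \<le> (\<Sum>k\<in>UNIV. \<Sum>l\<in>UNIV. P$k$l * D$k$l + \<epsilon> * xlogx (P$k$l) + P$k$l * (D'$k$l - D$k$l)
      + (f$k + g$l) * E$k$l + (2 + 4 * \<epsilon> / P$k$l) * r\<^sup>2)"
    by (intro sum_mono entry)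
  also have "\<dots> = ent_obj \<epsilon> D P + (\<Sum>k\<in>UNIV. \<Sum>l\<in>UNIV. P$k$l * (D'$k$l - D$k$l))
      + (\<Sum>k\<in>UNIV. \<Sum>l\<in>UNIV. (f$k + g$l) * E$k$l) + (\<Sum>k\<in>UNIV. \<Sum>l\<in>UNIV. (2 + 4 * \<epsilon> / P$k$l) * r\<^sup>2)"
    unfolding ent_obj_def by (simp add: sum.distrib sum_distrib_left)
  also have "\<dots> = dW \<epsilon> \<alpha> \<beta> D + dW_linearization P f g \<alpha> \<alpha>' \<beta> \<beta>' D D'
      + (\<Sum>k\<in>UNIV. \<Sum>l\<in>UNIV. 2 + 4 * \<epsilon> / P$k$l) * r\<^sup>2"
    unfolding dW_eq_ent_obj[OF e a b popt] dW_linearization_def E_def sum_potentials_mult_marginal_shift[OF a b a' b']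
    by (simp add: sum_distrib_right)
  finally show ?thesis .
qed

lemma ex_matrix_pos_lower_bound:
  fixes P :: "real^'b^'a"
  assumes "\<And>k l. 0 < P$k$l"
  shows "\<exists>p>0. \<forall>k l. p \<le> P$k$l"
proof -
  define p where "p = Min (range (\<lambda>(k, l). P$k$l))"
  have "p \<in> range (\<lambda>(k, l). P$k$l)" unfolding p_def by (intro Min_in) auto
  then have "0 < p" using assms by auto
  moreover have "p \<le> P$k$l" for k l
  proof -
    have "P$k$l \<in> range (\<lambda>(k, l). P$k$l)" by (rule image_eqI[of _ _ "(k, l)"]) auto
    then show ?thesis unfolding p_def by (intro Min_le) auto
  qed
  ultimately show ?thesis by blast
qed

definition dW_second_order_bound :: "real \<Rightarrow> real^'x \<Rightarrow> real^'y \<Rightarrow> real^'y^'x \<Rightarrow> real^'y^'x \<Rightarrow> real^'x \<Rightarrow> real^'y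
    \<Rightarrow> real \<Rightarrow> real \<Rightarrow> bool" where
  "dW_second_order_bound \<epsilon> \<alpha> \<beta> D P f g K \<rho> \<longleftrightarrow>
     (\<forall>\<alpha>' \<beta>' D' r. prob_vector \<alpha>' \<longrightarrow> prob_vector \<beta>' \<longrightarrow> r \<le> \<rho>
        \<longrightarrow> (\<forall>k l. \<bar>D'$k$l - D$k$l\<bar> \<le> r) \<longrightarrow> (\<forall>k. \<bar>\<alpha>'$k - \<alpha>$k\<bar> \<le> r) \<longrightarrow> (\<forall>l. \<bar>\<beta>'$l - \<beta>$l\<bar> \<le> r)
        \<longrightarrow> \<bar>dW \<epsilon> \<alpha>' \<beta>' D' - dW \<epsilon> \<alpha> \<beta> D - dW_linearization P f g \<alpha> \<alpha>' \<beta> \<beta>' D D'\<bar> \<le> K * r\<^sup>2)"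

lemma dW_second_order_boundD:
  assumes "dW_second_order_bound \<epsilon> \<alpha> \<beta> D P f g K \<rho>"
    and "prob_vector \<alpha>'" "prob_vector \<beta>'" "r \<le> \<rho>" "\<forall>k l. \<bar>D'$k$l - D$k$l\<bar> \<le> r"
    and "\<forall>k. \<bar>\<alpha>'$k - \<alpha>$k\<bar> \<le> r" "\<forall>l. \<bar>\<beta>'$l - \<beta>$l\<bar> \<le> r"
  shows "\<bar>dW \<epsilon> \<alpha>' \<beta>' D' - dW \<epsilon> \<alpha> \<beta> D - dW_linearization P f g \<alpha> \<alpha>' \<beta> \<beta>' D D'\<bar> \<le> K * r\<^sup>2"
  by (rule assms(1)[unfolded dW_second_order_bound_def, rule_format (no_asm), OF assms(2-)])

lemma dW_second_order_bound_mono: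
  assumes "dW_second_order_bound \<epsilon> \<alpha> \<beta> D P f g K \<rho>" and "K \<le> K'" and "\<rho>' \<le> \<rho>"
  shows "dW_second_order_bound \<epsilon> \<alpha> \<beta> D P f g K' \<rho>'"
  unfolding dW_second_order_bound_def
proof (intro allI impI)
  fix \<alpha>' \<beta>' D' r
  assume H: "prob_vector \<alpha>'" "prob_vector \<beta>'" "r \<le> \<rho>'" "\<forall>k l. \<bar>D'$k$l - D$k$l\<bar> \<le> r"
    "\<forall>k. \<bar>\<alpha>'$k - \<alpha>$k\<bar> \<le> r" "\<forall>l. \<bar>\<beta>'$l - \<beta>$l\<bar> \<le> r"
  have "r \<le> \<rho>" using H(3) assms(3) by linarith
  then have "\<bar>dW \<epsilon> \<alpha>' \<beta>' D' - dW \<epsilon> \<alpha> \<beta> D - dW_linearization P f g \<alpha> \<alpha>' \<beta> \<beta>' D D'\<bar> \<le> K * r\<^sup>2"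
    by (rule dW_second_order_boundD[OF assms(1) H(1,2) _ H(4-6)])
  also have "\<dots> \<le> K' * r\<^sup>2" using assms(2) by (intro mult_right_mono) simp_all
  finally show "\<bar>dW \<epsilon> \<alpha>' \<beta>' D' - dW \<epsilon> \<alpha> \<beta> D - dW_linearization P f g \<alpha> \<alpha>' \<beta> \<beta>' D D'\<bar> \<le> K' * r\<^sup>2" .
qed

lemma ex_dW_second_order_bound:
  assumes e: "0 < \<epsilon>" and a: "prob_vector \<alpha>" and b: "prob_vector \<beta>"
    and dopt: "is_dual_opt \<epsilon> \<alpha> \<beta> D f g" and popt: "is_opt_plan \<epsilon> \<alpha> \<beta> D P"
  shows "\<exists>K \<rho>. 0 \<le> K \<and> 0 < \<rho> \<and> dW_second_order_bound \<epsilon> \<alpha> \<beta> D P f g K \<rho>"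
proof -
  have Ppos: "0 < P$k$l" for k l
    using opt_plan_eq_gibbs_plan[OF e dopt popt] gibbs_plan_pos by metis
  obtain pmin where pmin: "0 < pmin" and pmin_le: "\<And>k l. pmin \<le> P$k$l"
    using ex_matrix_pos_lower_bound[OF Ppos] by blast
  have \<rho>: "0 < min \<epsilon> (pmin / 2)" using e pmin by simp
  have c0: "0 \<le> 2 + 4 * \<epsilon> / P$k$l" for k l
  proof -
    have "0 < 4 * \<epsilon> / P$k$l" using e Ppos[of k l] by simp
    then show ?thesis by simp
  qed
  define S where "S = (\<Sum>k\<in>UNIV. \<Sum>l\<in>UNIV. 2 + 4 * \<epsilon> / P$k$l)"
  have S0: "0 \<le> S" unfolding S_def by (intro sum_nonneg c0)
  have "dW_second_order_bound \<epsilon> \<alpha> \<beta> D P f g (3 / \<epsilon> + S) (min \<epsilon> (pmin / 2))"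
    unfolding dW_second_order_bound_def
  proof (intro allI impI)
    fix \<alpha>' \<beta>' D' r
    assume a': "prob_vector \<alpha>'" and b': "prob_vector \<beta>'" and r: "r \<le> min \<epsilon> (pmin / 2)"
      and rD: "\<forall>k l. \<bar>D'$k$l - D$k$l\<bar> \<le> r"
      and ra: "\<forall>k. \<bar>\<alpha>'$k - \<alpha>$k\<bar> \<le> r" and rb: "\<forall>l. \<bar>\<beta>'$l - \<beta>$l\<bar> \<le> r"
    have rP: "\<forall>k l. 2 * r \<le> P$k$l" using r pmin_le by (auto intro: order_trans[of _ pmin])
    have lower: "dW \<epsilon> \<alpha> \<beta> D + dW_linearization P f g \<alpha> \<alpha>' \<beta> \<beta>' D D' - 3 * r\<^sup>2 / \<epsilon> \<le> dW \<epsilon> \<alpha>' \<beta>' D'"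
      using r by (intro dW_lower_expansion[OF e a b dopt popt a' b' _ rD]) simp
    have upper: "dW \<epsilon> \<alpha>' \<beta>' D' \<le> dW \<epsilon> \<alpha> \<beta> D + dW_linearization P f g \<alpha> \<alpha>' \<beta> \<beta>' D D' + S * r\<^sup>2"
      unfolding S_def by (rule dW_upper_expansion[OF e a b dopt popt a' b' rP rD ra rb])
    have "0 \<le> 3 * r\<^sup>2 / \<epsilon>" and "0 \<le> S * r\<^sup>2" using e S0 by simp_all
    with lower upper show "\<bar>dW \<epsilon> \<alpha>' \<beta>' D' - dW \<epsilon> \<alpha> \<beta> D - dW_linearization P f g \<alpha> \<alpha>' \<beta> \<beta>' D D'\<bar>
        \<le> (3 / \<epsilon> + S) * r\<^sup>2"
      unfolding abs_le_iff distrib_right by simp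
  qed
  moreover have "0 \<le> 3 / \<epsilon> + S" using e S0 by simp
  ultimately show ?thesis using \<rho> by blast
qed

lemma finite_uniform_bound:
  fixes Q :: "'i::finite \<Rightarrow> real \<Rightarrow> real \<Rightarrow> bool"
  assumes ex: "\<And>i. \<exists>K \<rho>. 0 \<le> K \<and> 0 < \<rho> \<and> Q i K \<rho>"
    and mono: "\<And>i K K' \<rho> \<rho>'. Q i K \<rho> \<Longrightarrow> K \<le> K' \<Longrightarrow> \<rho>' \<le> \<rho> \<Longrightarrow> Q i K' \<rho>'"
  obtains K \<rho> where "0 \<le> K" and "0 < \<rho>" and "\<And>i. Q i K \<rho>"
proof -
  have "\<forall>i. \<exists>p. 0 \<le> fst p \<and> 0 < snd p \<and> Q i (fst p) (snd p)"
  proof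
    fix i
    obtain K \<rho> where "0 \<le> K \<and> 0 < \<rho> \<and> Q i K \<rho>" using ex by blast
    then show "\<exists>p. 0 \<le> fst p \<and> 0 < snd p \<and> Q i (fst p) (snd p)" by (intro exI[of _ "(K, \<rho>)"]) simp
  qed
  then have "\<exists>p. \<forall>i. 0 \<le> fst (p i) \<and> 0 < snd (p i) \<and> Q i (fst (p i)) (snd (p i))" by (rule choice)
  then obtain p where p: "\<And>i. 0 \<le> fst (p i) \<and> 0 < snd (p i) \<and> Q i (fst (p i)) (snd (p i))"
    by blast
  define K where "K = Max (range (fst \<circ> p))"
  define \<rho> where "\<rho> = Min (range (snd \<circ> p))"
  have K: "fst (p i) \<le> K" for i unfolding K_def by (rule Max_ge) auto
  have \<rho>: "\<rho> \<le> snd (p i)" for i unfolding \<rho>_def by (rule Min_le) auto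
  have "0 \<le> K" using p[of undefined] K[of undefined] by linarith
  moreover have "\<rho> \<in> range (snd \<circ> p)" unfolding \<rho>_def by (intro Min_in) auto
  then have "0 < \<rho>" using p by auto
  moreover have "Q i K \<rho>" for i using mono[OF p[THEN conjunct2, THEN conjunct2] K \<rho>] .
  ultimately show thesis using that by blast
qed

lemma ex_dW_second_order_bound_uniform:
  fixes \<alpha> :: "'i::finite \<Rightarrow> real^'x" and \<beta> :: "'j::finite \<Rightarrow> real^'y"
  assumes "0 < \<epsilon>" and "\<And>i. prob_vector (\<alpha> i)" and "\<And>j. prob_vector (\<beta> j)"
    and "\<And>i j. is_dual_opt \<epsilon> (\<alpha> i) (\<beta> j) D (f i j) (g i j)"
    and "\<And>i j. is_opt_plan \<epsilon> (\<alpha> i) (\<beta> j) D (P i j)"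
  shows "\<exists>K \<rho>. 0 \<le> K \<and> 0 < \<rho> \<and> (\<forall>i j. dW_second_order_bound \<epsilon> (\<alpha> i) (\<beta> j) D (P i j) (f i j) (g i j) K \<rho>)"
proof -
  define Q where "Q = (\<lambda>(i, j). dW_second_order_bound \<epsilon> (\<alpha> i) (\<beta> j) D (P i j) (f i j) (g i j))"
  have "\<exists>K \<rho>. 0 \<le> K \<and> 0 < \<rho> \<and> Q q K \<rho>" for q
    unfolding Q_def using ex_dW_second_order_bound[OF assms] by (simp split: prod.split)
  moreover have "Q q K' \<rho>'" if "Q q K \<rho>" "K \<le> K'" "\<rho>' \<le> \<rho>" for q K K' \<rho> \<rho>'
    using that dW_second_order_bound_mono unfolding Q_def by (simp split: prod.splits)
  ultimately obtain K \<rho> where "0 \<le> K" "0 < \<rho>" and Q: "\<And>q. Q q K \<rho>"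
    by (rule finite_uniform_bound[of Q]) blast+
  have "dW_second_order_bound \<epsilon> (\<alpha> i) (\<beta> j) D (P i j) (f i j) (g i j) K \<rho>" for i j
    using Q[of "(i, j)"] by (simp add: Q_def)
  with \<open>0 \<le> K\<close> \<open>0 < \<rho>\<close> show ?thesis by blast
qed

lemma abs_dW_linearization_same_cost_le:
  assumes "\<forall>k. \<bar>\<alpha>'$k - \<alpha>$k\<bar> \<le> s" and "\<forall>l. \<bar>\<beta>'$l - \<beta>$l\<bar> \<le> s"
  shows "\<bar>dW_linearization P f g \<alpha> \<alpha>' \<beta> \<beta>' D D\<bar> \<le> ((\<Sum>k\<in>UNIV. \<bar>f$k\<bar>) + (\<Sum>l\<in>UNIV. \<bar>g$l\<bar>)) * s"
proof -
  have "\<bar>\<Sum>k\<in>UNIV. f$k * (\<alpha>'$k - \<alpha>$k)\<bar> \<le> (\<Sum>k\<in>UNIV. \<bar>f$k\<bar> * s)"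
    using assms(1) by (intro order_trans[OF sum_abs] sum_mono) (simp add: abs_mult mult_left_mono)
  moreover have "\<bar>\<Sum>l\<in>UNIV. g$l * (\<beta>'$l - \<beta>$l)\<bar> \<le> (\<Sum>l\<in>UNIV. \<bar>g$l\<bar> * s)"
    using assms(2) by (intro order_trans[OF sum_abs] sum_mono) (simp add: abs_mult mult_left_mono)
  ultimately show ?thesis
    unfolding dW_linearization_def by (simp add: sum_distrib_right[symmetric] distrib_right abs_le_iff)
qed

lemma ex_max_abs_nth:
  fixes v :: "real^'n"
  shows "\<exists>i. \<forall>j. \<bar>v$j\<bar> \<le> \<bar>v$i\<bar>"
proof -
  have "Max (range (\<lambda>i. \<bar>v$i\<bar>)) \<in> range (\<lambda>i. \<bar>v$i\<bar>)" by (intro Max_in) auto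
  then obtain i where i: "Max (range (\<lambda>i. \<bar>v$i\<bar>)) = \<bar>v$i\<bar>" unfolding image_iff by blast
  have "\<bar>v$j\<bar> \<le> Max (range (\<lambda>i. \<bar>v$i\<bar>))" for j by (rule Max_ge) auto
  then show ?thesis using i by metis
qed

lemma ex_matrix_max_abs_entry:
  fixes M :: "real^'b^'a"
  shows "\<exists>k l. \<forall>k' l'. \<bar>M$k'$l'\<bar> \<le> \<bar>M$k$l\<bar>"
proof -
  obtain q where "\<forall>q'. \<bar>flatten M $ q'\<bar> \<le> \<bar>flatten M $ q\<bar>" using ex_max_abs_nth by blast
  then have "\<forall>k' l'. \<bar>M$k'$l'\<bar> \<le> \<bar>M $ fst q $ snd q\<bar>" by (auto simp: flatten_def)
  then show ?thesis by blast
qed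

lemma dW_second_order_bound_same_cost:
  assumes bound: "dW_second_order_bound \<epsilon> \<alpha> \<beta> D P f g K \<rho>" and K: "0 \<le> K"
    and "prob_vector \<alpha>'" "prob_vector \<beta>'" and s: "0 \<le> s" "s \<le> \<rho>"
    and sa: "\<forall>k. \<bar>\<alpha>'$k - \<alpha>$k\<bar> \<le> s" and sb: "\<forall>l. \<bar>\<beta>'$l - \<beta>$l\<bar> \<le> s"
  shows "\<bar>dW \<epsilon> \<alpha>' \<beta>' D - dW \<epsilon> \<alpha> \<beta> D\<bar> \<le> ((\<Sum>k\<in>UNIV. \<bar>f$k\<bar>) + (\<Sum>l\<in>UNIV. \<bar>g$l\<bar>) + K * \<rho>) * s"
proof -
  have "\<bar>dW \<epsilon> \<alpha>' \<beta>' D - dW \<epsilon> \<alpha> \<beta> D - dW_linearization P f g \<alpha> \<alpha>' \<beta> \<beta>' D D\<bar> \<le> K * s\<^sup>2"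
    using s by (intro dW_second_order_boundD[OF bound assms(3,4) s(2) _ sa sb]) simp
  moreover have "K * s\<^sup>2 \<le> K * \<rho> * s"
    using mult_left_mono[OF mult_right_mono[OF s(2) s(1)] K] by (simp add: power2_eq_square mult.assoc)
  moreover have "\<bar>dW_linearization P f g \<alpha> \<alpha>' \<beta> \<beta>' D D\<bar> \<le> ((\<Sum>k\<in>UNIV. \<bar>f$k\<bar>) + (\<Sum>l\<in>UNIV. \<bar>g$l\<bar>)) * s"
    by (rule abs_dW_linearization_same_cost_le[OF sa sb])
  ultimately show ?thesis by (simp add: distrib_right abs_le_iff)
qed

lemma abs_Cinf_diff_le:
  assumes e: "0 < \<epsilon>" and d0: "0 < \<delta>" and d1: "\<delta> \<le> 1"
    and X: "row_stochastic mX" and Y: "row_stochastic mY" and X': "row_stochastic mX'" and Y': "row_stochastic mY'"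
    and M: "\<forall>k l. \<bar>Cinf \<delta> \<epsilon> C' mX' mY' $k$l - Cinf \<delta> \<epsilon> C mX mY $k$l\<bar> \<le> M"
  shows "\<bar>Cinf \<delta> \<epsilon> C' mX' mY' $i$j - Cinf \<delta> \<epsilon> C mX mY $i$j\<bar> \<le> \<delta> * \<bar>C'$i$j - C$i$j\<bar>
    + (1 - \<delta>) * (M + \<bar>dW \<epsilon> (mX'$i) (mY'$j) (Cinf \<delta> \<epsilon> C mX mY) - dW \<epsilon> (mX$i) (mY$j) (Cinf \<delta> \<epsilon> C mX mY)\<bar>)"
proof -
  let ?D0 = "Cinf \<delta> \<epsilon> C mX mY" and ?D1 = "Cinf \<delta> \<epsilon> C' mX' mY'"
  have "\<bar>dW \<epsilon> (mX'$i) (mY'$j) ?D1 - dW \<epsilon> (mX'$i) (mY'$j) ?D0\<bar> \<le> M"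
    by (rule dW_cost_lipschitz[OF e row_stochastic_prob_vector[OF X'] row_stochastic_prob_vector[OF Y'] M])
  then have "\<bar>dW \<epsilon> (mX'$i) (mY'$j) ?D1 - dW \<epsilon> (mX$i) (mY$j) ?D0\<bar>
      \<le> M + \<bar>dW \<epsilon> (mX'$i) (mY'$j) ?D0 - dW \<epsilon> (mX$i) (mY$j) ?D0\<bar>" by linarith
  then have "\<bar>(1 - \<delta>) * (dW \<epsilon> (mX'$i) (mY'$j) ?D1 - dW \<epsilon> (mX$i) (mY$j) ?D0)\<bar>
      \<le> (1 - \<delta>) * (M + \<bar>dW \<epsilon> (mX'$i) (mY'$j) ?D0 - dW \<epsilon> (mX$i) (mY$j) ?D0\<bar>)"
    unfolding abs_mult using d1 by (simp add: mult_left_mono)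
  moreover have "\<bar>\<delta> * (C'$i$j - C$i$j)\<bar> = \<delta> * \<bar>C'$i$j - C$i$j\<bar>" using d0 by (simp add: abs_mult)
  moreover have "?D1$i$j - ?D0$i$j = \<delta> * (C'$i$j - C$i$j)
      + (1 - \<delta>) * (dW \<epsilon> (mX'$i) (mY'$j) ?D1 - dW \<epsilon> (mX$i) (mY$j) ?D0)"
    using Cinf_eq[OF e d0 d1 X Y, of C i j] Cinf_eq[OF e d0 d1 X' Y', of C' i j] by (simp add: algebra_simps)
  ultimately show ?thesis by linarith
qed

text \<open>The fixed-point equation transfers the Lipschitz bound on \<open>dW\<close> in the marginals to
  \<open>Cinf\<close>, at the price of the factor \<open>1 / \<delta>\<close> coming from the contraction rate \<open>1 - \<delta>\<close>.\<close>

lemma Cinf_locally_lipschitz: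
  fixes C :: "real^'y^'x" and mX :: "real^'x^'x" and mY :: "real^'y^'y"
    and P :: "'x \<Rightarrow> 'y \<Rightarrow> real^'y^'x" and f :: "'x \<Rightarrow> 'y \<Rightarrow> real^'x" and g :: "'x \<Rightarrow> 'y \<Rightarrow> real^'y"
  assumes X: "row_stochastic mX" and Y: "row_stochastic mY"
    and d0: "0 < \<delta>" and d1: "\<delta> \<le> 1" and e: "0 < \<epsilon>"
    and popt: "\<And>i j. is_opt_plan \<epsilon> (mX$i) (mY$j) (Cinf \<delta> \<epsilon> C mX mY) (P i j)"
    and dopt: "\<And>i j. is_dual_opt \<epsilon> (mX$i) (mY$j) (Cinf \<delta> \<epsilon> C mX mY) (f i j) (g i j)"
  obtains L \<rho> where "1 \<le> L" and "0 < \<rho>"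
    and "\<And>C' mX' mY' s. row_stochastic mX' \<Longrightarrow> row_stochastic mY' \<Longrightarrow> s \<le> \<rho>
      \<Longrightarrow> \<forall>i j. \<bar>C'$i$j - C$i$j\<bar> \<le> s \<Longrightarrow> \<forall>i j. \<bar>mX'$i$j - mX$i$j\<bar> \<le> s \<Longrightarrow> \<forall>i j. \<bar>mY'$i$j - mY$i$j\<bar> \<le> s
      \<Longrightarrow> \<forall>k l. \<bar>Cinf \<delta> \<epsilon> C' mX' mY' $k$l - Cinf \<delta> \<epsilon> C mX mY $k$l\<bar> \<le> L * s"
proof -
  define D0 where "D0 = Cinf \<delta> \<epsilon> C mX mY"
  obtain K \<rho> where K: "0 \<le> K" and \<rho>: "0 < \<rho>"
    and bound: "\<And>i j. dW_second_order_bound \<epsilon> (mX$i) (mY$j) D0 (P i j) (f i j) (g i j) K \<rho>"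
    using ex_dW_second_order_bound_uniform[where \<alpha>="\<lambda>i. mX$i" and \<beta>="\<lambda>j. mY$j",
          OF e row_stochastic_prob_vector[OF X] row_stochastic_prob_vector[OF Y] dopt popt]
    unfolding D0_def by blast
  define norm1 where "norm1 q = (\<Sum>k\<in>UNIV. \<bar>f (fst q) (snd q) $k\<bar>) + (\<Sum>l\<in>UNIV. \<bar>g (fst q) (snd q) $l\<bar>)" for q
  define F where "F = Max (range norm1)"
  have F: "norm1 (i, j) \<le> F" for i j unfolding F_def by (rule Max_ge) simp_all
  have "0 \<le> norm1 (i, j)" for i j unfolding norm1_def by (intro add_nonneg_nonneg sum_nonneg) simp_all
  then have F0: "0 \<le> F" using F[of undefined undefined] by (rule order_trans)
  define L where "L = 1 + (F + K * \<rho>) / \<delta>"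
  have "0 \<le> (F + K * \<rho>) / \<delta>" using F0 K \<rho> d0 by simp
  then have L1: "1 \<le> L" unfolding L_def by simp
  have main: "\<forall>k l. \<bar>Cinf \<delta> \<epsilon> C' mX' mY' $k$l - D0$k$l\<bar> \<le> L * s"
    if X': "row_stochastic mX'" and Y': "row_stochastic mY'" and s\<rho>: "s \<le> \<rho>"
      and sC: "\<forall>i j. \<bar>C'$i$j - C$i$j\<bar> \<le> s" and sX: "\<forall>i j. \<bar>mX'$i$j - mX$i$j\<bar> \<le> s"
      and sY: "\<forall>i j. \<bar>mY'$i$j - mY$i$j\<bar> \<le> s" for C' mX' mY' s
  proof -
    define D1 where "D1 = Cinf \<delta> \<epsilon> C' mX' mY'"
    have s0: "0 \<le> s" using order_trans[OF abs_ge_zero sC[rule_format]] .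
    obtain k0 l0 where "\<forall>k l. \<bar>(D1 - D0)$k$l\<bar> \<le> \<bar>(D1 - D0)$k0$l0\<bar>"
      using ex_matrix_max_abs_entry[of "D1 - D0"] by blast
    then have M: "\<forall>k l. \<bar>D1$k$l - D0$k$l\<bar> \<le> \<bar>D1$k0$l0 - D0$k0$l0\<bar>" by simp
    have "\<bar>dW \<epsilon> (mX'$k0) (mY'$l0) D0 - dW \<epsilon> (mX$k0) (mY$l0) D0\<bar> \<le> (norm1 (k0, l0) + K * \<rho>) * s"
      unfolding norm1_def fst_conv snd_conv using sX sY
      by (intro dW_second_order_bound_same_cost[OF bound K row_stochastic_prob_vector[OF X']
          row_stochastic_prob_vector[OF Y'] s0 s\<rho>]) simp_all
    also have "\<dots> \<le> (F + K * \<rho>) * s" using F s0 by (intro mult_right_mono) simp_all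
    finally have "\<bar>D1$k0$l0 - D0$k0$l0\<bar>
        \<le> \<delta> * s + (1 - \<delta>) * (\<bar>D1$k0$l0 - D0$k0$l0\<bar> + (F + K * \<rho>) * s)"
      using abs_Cinf_diff_le[OF e d0 d1 X Y X' Y' M[unfolded D0_def D1_def], of k0 l0] sC d0 d1
      unfolding D0_def D1_def by (smt (verit) mult_left_mono)
    then have "\<delta> * \<bar>D1$k0$l0 - D0$k0$l0\<bar> \<le> \<delta> * s + (1 - \<delta>) * ((F + K * \<rho>) * s)"
      by (simp add: algebra_simps)
    also have "\<dots> \<le> \<delta> * s + (F + K * \<rho>) * s"
      using mult_left_le_one_le[of "(F + K * \<rho>) * s" "1 - \<delta>"] d0 d1 F0 K \<rho> s0 by simp
    also have "\<dots> = \<delta> * (L * s)" unfolding L_def using d0 by (simp add: field_simps)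
    finally have "\<bar>D1$k0$l0 - D0$k0$l0\<bar> \<le> L * s" using d0 by simp
    then show ?thesis using M unfolding D1_def by (meson order_trans)
  qed
  show thesis using L1 \<rho> main unfolding D0_def by (rule that)
qed

lemma Cinf_first_order_residual:
  fixes C :: "real^'y^'x" and mX :: "real^'x^'x" and mY :: "real^'y^'y"
    and P :: "'x \<Rightarrow> 'y \<Rightarrow> real^'y^'x" and f :: "'x \<Rightarrow> 'y \<Rightarrow> real^'x" and g :: "'x \<Rightarrow> 'y \<Rightarrow> real^'y"
  assumes X: "row_stochastic mX" and Y: "row_stochastic mY"
    and d0: "0 < \<delta>" and d1: "\<delta> \<le> 1" and e: "0 < \<epsilon>"
    and popt: "\<And>i j. is_opt_plan \<epsilon> (mX$i) (mY$j) (Cinf \<delta> \<epsilon> C mX mY) (P i j)"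
    and dopt: "\<And>i j. is_dual_opt \<epsilon> (mX$i) (mY$j) (Cinf \<delta> \<epsilon> C mX mY) (f i j) (g i j)"
  obtains K \<rho> where "0 \<le> K" and "0 < \<rho>"
    and "\<And>C' mX' mY' s i j. row_stochastic mX' \<Longrightarrow> row_stochastic mY' \<Longrightarrow> s \<le> \<rho>
      \<Longrightarrow> \<forall>i j. \<bar>C'$i$j - C$i$j\<bar> \<le> s \<Longrightarrow> \<forall>i j. \<bar>mX'$i$j - mX$i$j\<bar> \<le> s \<Longrightarrow> \<forall>i j. \<bar>mY'$i$j - mY$i$j\<bar> \<le> s
      \<Longrightarrow> \<bar>Cinf \<delta> \<epsilon> C' mX' mY' $i$j - Cinf \<delta> \<epsilon> C mX mY $i$j - \<delta> * (C'$i$j - C$i$j)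
           - (1 - \<delta>) * dW_linearization (P i j) (f i j) (g i j) (mX$i) (mX'$i) (mY$j) (mY'$j)
               (Cinf \<delta> \<epsilon> C mX mY) (Cinf \<delta> \<epsilon> C' mX' mY')\<bar> \<le> K * s\<^sup>2"
proof -
  define D0 where "D0 = Cinf \<delta> \<epsilon> C mX mY"
  obtain L \<rho>L where L: "1 \<le> L" and \<rho>L: "0 < \<rho>L"
    and lip: "\<And>C' mX' mY' s. row_stochastic mX' \<Longrightarrow> row_stochastic mY' \<Longrightarrow> s \<le> \<rho>L
      \<Longrightarrow> \<forall>i j. \<bar>C'$i$j - C$i$j\<bar> \<le> s \<Longrightarrow> \<forall>i j. \<bar>mX'$i$j - mX$i$j\<bar> \<le> s \<Longrightarrow> \<forall>i j. \<bar>mY'$i$j - mY$i$j\<bar> \<le> s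
      \<Longrightarrow> \<forall>k l. \<bar>Cinf \<delta> \<epsilon> C' mX' mY' $k$l - D0$k$l\<bar> \<le> L * s"
    by (rule Cinf_locally_lipschitz[OF X Y d0 d1 e popt dopt, folded D0_def]) (rule that)
  obtain K \<rho> where K: "0 \<le> K" and \<rho>: "0 < \<rho>"
    and bound: "\<And>i j. dW_second_order_bound \<epsilon> (mX$i) (mY$j) D0 (P i j) (f i j) (g i j) K \<rho>"
    using ex_dW_second_order_bound_uniform[where \<alpha>="\<lambda>i. mX$i" and \<beta>="\<lambda>j. mY$j",
          OF e row_stochastic_prob_vector[OF X] row_stochastic_prob_vector[OF Y] dopt popt]
    unfolding D0_def by blast
  have main: "\<bar>Cinf \<delta> \<epsilon> C' mX' mY' $i$j - D0$i$j - \<delta> * (C'$i$j - C$i$j)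
           - (1 - \<delta>) * dW_linearization (P i j) (f i j) (g i j) (mX$i) (mX'$i) (mY$j) (mY'$j)
               D0 (Cinf \<delta> \<epsilon> C' mX' mY')\<bar> \<le> (K * L\<^sup>2) * s\<^sup>2"
    if X': "row_stochastic mX'" and Y': "row_stochastic mY'" and s\<rho>: "s \<le> min \<rho>L (\<rho> / L)"
      and sC: "\<forall>i j. \<bar>C'$i$j - C$i$j\<bar> \<le> s" and sX: "\<forall>i j. \<bar>mX'$i$j - mX$i$j\<bar> \<le> s"
      and sY: "\<forall>i j. \<bar>mY'$i$j - mY$i$j\<bar> \<le> s" for C' mX' mY' s i j
  proof -
    define D1 where "D1 = Cinf \<delta> \<epsilon> C' mX' mY'"
    have s0: "0 \<le> s" using order_trans[OF abs_ge_zero sC[rule_format]] .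
    have sr: "s \<le> L * s" using L s0 by (simp add: mult_le_cancel_right1)
    have r\<rho>: "L * s \<le> \<rho>" using s\<rho> L by (simp add: field_simps)
    have "\<forall>k l. \<bar>D1$k$l - D0$k$l\<bar> \<le> L * s"
      unfolding D1_def using s\<rho> by (intro lip[OF X' Y' _ sC sX sY]) simp
    moreover have "\<forall>k. \<bar>mX'$i$k - mX$i$k\<bar> \<le> L * s" and "\<forall>l. \<bar>mY'$j$l - mY$j$l\<bar> \<le> L * s"
      using sX sY sr by (meson order_trans)+
    ultimately have remainder: "\<bar>dW \<epsilon> (mX'$i) (mY'$j) D1 - dW \<epsilon> (mX$i) (mY$j) D0
        - dW_linearization (P i j) (f i j) (g i j) (mX$i) (mX'$i) (mY$j) (mY'$j) D0 D1\<bar> \<le> K * (L * s)\<^sup>2"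
      by (rule dW_second_order_boundD[OF bound row_stochastic_prob_vector[OF X']
          row_stochastic_prob_vector[OF Y'] r\<rho>])
    have eq: "D1$i$j - D0$i$j - \<delta> * (C'$i$j - C$i$j)
        - (1 - \<delta>) * dW_linearization (P i j) (f i j) (g i j) (mX$i) (mX'$i) (mY$j) (mY'$j) D0 D1
      = (1 - \<delta>) * (dW \<epsilon> (mX'$i) (mY'$j) D1 - dW \<epsilon> (mX$i) (mY$j) D0
        - dW_linearization (P i j) (f i j) (g i j) (mX$i) (mX'$i) (mY$j) (mY'$j) D0 D1)"
      unfolding D0_def D1_def Cinf_eq[OF e d0 d1 X Y, of C i j] Cinf_eq[OF e d0 d1 X' Y', of C' i j]
      by (simp add: algebra_simps)
    have "\<bar>D1$i$j - D0$i$j - \<delta> * (C'$i$j - C$i$j)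
        - (1 - \<delta>) * dW_linearization (P i j) (f i j) (g i j) (mX$i) (mX'$i) (mY$j) (mY'$j) D0 D1\<bar>
        \<le> \<bar>dW \<epsilon> (mX'$i) (mY'$j) D1 - dW \<epsilon> (mX$i) (mY$j) D0
        - dW_linearization (P i j) (f i j) (g i j) (mX$i) (mX'$i) (mY$j) (mY'$j) D0 D1\<bar>"
      unfolding eq abs_mult using d0 d1 by (simp add: mult_left_le_one_le)
    with remainder have "\<bar>D1$i$j - D0$i$j - \<delta> * (C'$i$j - C$i$j)
        - (1 - \<delta>) * dW_linearization (P i j) (f i j) (g i j) (mX$i) (mX'$i) (mY$j) (mY'$j) D0 D1\<bar>
        \<le> K * (L * s)\<^sup>2" by linarith
    then show ?thesis unfolding D1_def by (simp add: power_mult_distrib mult.assoc)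
  qed
  have "0 \<le> K * L\<^sup>2" using K by simp
  moreover have "0 < min \<rho>L (\<rho> / L)" using \<rho>L \<rho> L by simp
  ultimately show thesis using main unfolding D0_def by (rule that)
qed

lemma invertible_mat1_minus_scaled_stochastic:
  fixes Q :: "real^'n^'n"
  assumes Q0: "\<forall>r c. 0 \<le> Q$r$c" and Q1: "\<forall>r. (\<Sum>c\<in>UNIV. Q$r$c) = 1"
    and d0: "0 < \<delta>" and d1: "\<delta> \<le> 1"
  shows "invertible (mat 1 - (1 - \<delta>) *\<^sub>R Q)"
  unfolding invertible_left_inverse matrix_left_invertible_ker
proof (intro allI impI)
  fix v :: "real^'n"
  assume ker: "(mat 1 - (1 - \<delta>) *\<^sub>R Q) *v v = 0"
  have v: "v$r = (1 - \<delta>) * (\<Sum>c\<in>UNIV. Q$r$c * v$c)" for r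
  proof -
    have "((mat 1 - (1 - \<delta>) *\<^sub>R Q) *v v) $ r = 0" using ker by simp
    then show ?thesis
      by (simp add: matrix_vector_mult_diff_rdistrib scaleR_matrix_vector_assoc[symmetric]
          matrix_vector_mult_def[of Q])
  qed
  obtain r0 where r0: "\<forall>r. \<bar>v$r\<bar> \<le> \<bar>v$r0\<bar>" using ex_max_abs_nth by blast
  have "\<bar>\<Sum>c\<in>UNIV. Q$r0$c * v$c\<bar> \<le> (\<Sum>c\<in>UNIV. Q$r0$c * \<bar>v$r0\<bar>)"
    using Q0 r0 by (intro order_trans[OF sum_abs] sum_mono) (simp add: abs_mult mult_left_mono)
  also have "\<dots> = \<bar>v$r0\<bar>" using Q1 by (simp add: sum_distrib_right[symmetric])
  finally have "\<bar>v$r0\<bar> \<le> (1 - \<delta>) * \<bar>v$r0\<bar>"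
    using v[of r0] d1 by (simp add: abs_mult mult_left_mono)
  then have "\<bar>v$r0\<bar> = 0" using d0 by (simp add: mult_le_cancel_right1)
  then show "v = 0" using r0 by (simp add: vec_eq_iff)
qed

lemma matrix_inv_left:
  fixes A :: "real^'n^'n"
  assumes "invertible A"
  shows "matrix_inv A ** A = mat 1"
proof -
  have "\<exists>A'. A ** A' = mat 1 \<and> A' ** A = mat 1" using assms unfolding invertible_def by blast
  then have "A ** matrix_inv A = mat 1 \<and> matrix_inv A ** A = mat 1"
    unfolding matrix_inv_def by (rule someI_ex)
  then show ?thesis by simp
qed

lemma has_derivative_within_quadratic_remainder:
  assumes L: "bounded_linear L" and \<rho>: "0 < \<rho>" and K: "0 \<le> K"
    and rem: "\<And>y. y \<in> S \<Longrightarrow> norm (y - x) \<le> \<rho> \<Longrightarrow> norm (F y - F x - L (y - x)) \<le> K * (norm (y - x))\<^sup>2"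
  shows "(F has_derivative L) (at x within S)"
  unfolding has_derivative_within_alt
proof (intro conjI L allI impI)
  fix \<eta> :: real assume \<eta>: "0 < \<eta>"
  show "\<exists>d>0. \<forall>y\<in>S. norm (y - x) < d \<longrightarrow> norm (F y - F x - L (y - x)) \<le> \<eta> * norm (y - x)"
  proof (intro exI conjI ballI impI)
    show "0 < min \<rho> (\<eta> / (K + 1))" using \<rho> \<eta> K by simp
    fix y assume y: "y \<in> S" and yd: "norm (y - x) < min \<rho> (\<eta> / (K + 1))"
    have "K * norm (y - x) \<le> K * (\<eta> / (K + 1))" using yd K by (intro mult_left_mono) auto
    also have "\<dots> \<le> \<eta>" using K \<eta> by (simp add: field_simps)
    finally have "K * norm (y - x) * norm (y - x) \<le> \<eta> * norm (y - x)" by (intro mult_right_mono) auto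
    with rem[OF y] yd show "norm (F y - F x - L (y - x)) \<le> \<eta> * norm (y - x)"
      by (simp add: power2_eq_square mult.assoc)
  qed
qed

lemma has_derivative_linear_recursion:
  fixes F :: "'a::real_normed_vector \<Rightarrow> real^'n" and M :: "real^'n^'n"
  assumes inv: "invertible (mat 1 - M)" and B: "bounded_linear B" and \<rho>: "0 < \<rho>" and K: "0 \<le> K"
    and rem: "\<And>y. y \<in> S \<Longrightarrow> norm (y - x) \<le> \<rho>
      \<Longrightarrow> norm (F y - F x - M *v (F y - F x) - B (y - x)) \<le> K * (norm (y - x))\<^sup>2"
  shows "(F has_derivative (\<lambda>h. matrix_inv (mat 1 - M) *v B h)) (at x within S)"
proof -
  define Ai where "Ai = matrix_inv (mat 1 - M)"
  obtain c where c: "0 < c" and bound: "\<And>v. norm (Ai *v v) \<le> norm v * c"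
    using bounded_linear.pos_bounded[OF matrix_vector_mul_bounded_linear[of Ai]] by blast
  show ?thesis unfolding Ai_def[symmetric]
  proof (rule has_derivative_within_quadratic_remainder[OF _ \<rho>])
    show "bounded_linear (\<lambda>h. Ai *v B h)"
      using bounded_linear_compose[OF matrix_vector_mul_bounded_linear B] .
    show "0 \<le> c * K" using c K by simp
    fix y assume y: "y \<in> S" "norm (y - x) \<le> \<rho>"
    let ?w = "F y - F x"
    have "Ai *v (?w - M *v ?w) = ?w"
    proof -
      have "Ai *v (?w - M *v ?w) = (Ai ** (mat 1 - M)) *v ?w"
        by (simp add: matrix_vector_mul_assoc[symmetric] matrix_vector_mult_diff_rdistrib)
      then show ?thesis using matrix_inv_left[OF inv] unfolding Ai_def by simp
    qed
    then have "?w - Ai *v B (y - x) = Ai *v (?w - M *v ?w - B (y - x))"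
      by (simp add: matrix_vector_mult_diff_distrib)
    then have "norm (?w - Ai *v B (y - x)) \<le> norm (?w - M *v ?w - B (y - x)) * c"
      using bound by simp
    also have "\<dots> \<le> K * (norm (y - x))\<^sup>2 * c" using rem[OF y] c by (intro mult_right_mono) auto
    finally show "norm (F y - F x - Ai *v B (y - x)) \<le> c * K * (norm (y - x))\<^sup>2"
      by (simp add: algebra_simps)
  qed
qed

lemma flatten_add: "flatten (M + N) = flatten M + flatten N"
  by (simp add: flatten_def vec_eq_iff)

lemma flatten_scaleR: "flatten (c *\<^sub>R M) = c *\<^sub>R flatten M"
  by (simp add: flatten_def vec_eq_iff)

lemma matrix_vector_mult_flatten_nth: "(M *v flatten N) $ r = (\<Sum>c\<in>UNIV. M $ r $ c * N $ fst c $ snd c)"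
  by (simp add: matrix_vector_mult_def flatten_def)

text \<open>The tensors \<open>P\<close>, \<open>F\<close> and \<open>G\<close> of the statement, as matrices with rows indexed by \<open>(i, j)\<close>.\<close>

definition plan_tensor :: "('x::finite \<Rightarrow> 'y::finite \<Rightarrow> real^'y^'x) \<Rightarrow> real^('x \<times> 'y)^('x \<times> 'y)" where
  "plan_tensor P = (\<chi> r c. P (fst r) (snd r) $ fst c $ snd c)"

definition row_potential_tensor :: "('x::finite \<Rightarrow> 'y::finite \<Rightarrow> real^'x) \<Rightarrow> real^('x \<times> 'x)^('x \<times> 'y)" where
  "row_potential_tensor f = (\<chi> r c. if fst r = fst c then f (fst r) (snd r) $ snd c else 0)"

definition col_potential_tensor :: "('x::finite \<Rightarrow> 'y::finite \<Rightarrow> real^'y) \<Rightarrow> real^('y \<times> 'y)^('x \<times> 'y)" where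
  "col_potential_tensor g = (\<chi> r c. if snd r = fst c then g (fst r) (snd r) $ snd c else 0)"

lemma plan_tensor_mult_flatten:
  "(plan_tensor P *v flatten D) $ (i, j) = (\<Sum>k\<in>UNIV. \<Sum>l\<in>UNIV. P i j $k$l * D$k$l)"
  by (simp add: matrix_vector_mult_flatten_nth plan_tensor_def sum_UNIV_prod)

lemma row_potential_tensor_mult_flatten:
  "(row_potential_tensor f *v flatten E) $ (i, j) = (\<Sum>k\<in>UNIV. f i j $k * E$i$k)"
proof -
  have "(row_potential_tensor f *v flatten E) $ (i, j)
      = (\<Sum>k'\<in>UNIV. \<Sum>k\<in>UNIV. (if i = k' then f i j $k else 0) * E$k'$k)"
    by (simp add: matrix_vector_mult_flatten_nth row_potential_tensor_def sum_UNIV_prod cong: if_cong)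
  also have "\<dots> = (\<Sum>k'\<in>UNIV. if i = k' then (\<Sum>k\<in>UNIV. f i j $k * E$k'$k) else 0)"
    by (intro sum.cong) auto
  finally show ?thesis by simp
qed

lemma col_potential_tensor_mult_flatten:
  "(col_potential_tensor g *v flatten E) $ (i, j) = (\<Sum>l\<in>UNIV. g i j $l * E$j$l)"
proof -
  have "(col_potential_tensor g *v flatten E) $ (i, j)
      = (\<Sum>l'\<in>UNIV. \<Sum>l\<in>UNIV. (if j = l' then g i j $l else 0) * E$l'$l)"
    by (simp add: matrix_vector_mult_flatten_nth col_potential_tensor_def sum_UNIV_prod cong: if_cong)
  also have "\<dots> = (\<Sum>l'\<in>UNIV. if j = l' then (\<Sum>l\<in>UNIV. g i j $l * E$l'$l) else 0)"
    by (intro sum.cong) auto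
  finally show ?thesis by simp
qed

lemma invertible_plan_tensor:
  assumes "\<And>i j. P i j \<in> couplings (mX$i) (mY$j)" and "row_stochastic mX"
    and "0 < \<delta>" and "\<delta> \<le> 1"
  shows "invertible (mat 1 - (1 - \<delta>) *\<^sub>R plan_tensor P)"
proof (rule invertible_mat1_minus_scaled_stochastic[OF _ _ assms(3,4)])
  show "\<forall>r c. 0 \<le> plan_tensor P $r$c"
    using couplings_nonneg[OF assms(1)] by (simp add: plan_tensor_def)
  show "\<forall>r. (\<Sum>c\<in>UNIV. plan_tensor P $r$c) = 1"
    using couplings_total_mass[OF assms(1) row_stochastic_prob_vector[OF assms(2)]]
    by (simp add: plan_tensor_def sum_UNIV_prod)
qed

text \<open>By the envelope theorem, the derivative of the right-hand side of the fixed-point equation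
  in the data \<open>(C, mX, mY)\<close>, at fixed cost argument.\<close>

definition data_derivative :: "real \<Rightarrow> ('x::finite \<Rightarrow> 'y::finite \<Rightarrow> real^'x) \<Rightarrow> ('x \<Rightarrow> 'y \<Rightarrow> real^'y)
    \<Rightarrow> (real^'y^'x) \<times> (real^'x^'x) \<times> (real^'y^'y) \<Rightarrow> real^('x \<times> 'y)" where
  "data_derivative \<delta> f g = (\<lambda>(dC, dX, dY). \<delta> *\<^sub>R flatten dC
     + (1 - \<delta>) *\<^sub>R (row_potential_tensor f *v flatten dX + col_potential_tensor g *v flatten dY))"

lemma bounded_linear_data_derivative: "bounded_linear (data_derivative \<delta> f g)"
proof -
  have "linear (data_derivative \<delta> f g)"
    unfolding data_derivative_def by (rule linearI; clarsimp simp: flatten_add flatten_scaleR algebra_simps)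
  then show ?thesis by (simp add: linear_conv_bounded_linear)
qed

lemma data_derivative_nth:
  "data_derivative \<delta> f g (dC, dX, dY) $ (i, j)
     = \<delta> * dC$i$j + (1 - \<delta>) * ((\<Sum>k\<in>UNIV. f i j $k * dX$i$k) + (\<Sum>l\<in>UNIV. g i j $l * dY$j$l))"
  by (simp add: data_derivative_def row_potential_tensor_mult_flatten col_potential_tensor_mult_flatten)

lemma abs_nth_le_norm_triple:
  fixes u :: "real^'b^'a" and v :: "real^'d^'c" and w :: "real^'f^'e"
  shows "\<bar>u$i$j\<bar> \<le> norm (u, v, w)" and "\<bar>v$k$l\<bar> \<le> norm (u, v, w)" and "\<bar>w$m$n\<bar> \<le> norm (u, v, w)"
proof -
  have "norm u \<le> norm (u, v, w)" by (rule norm_fst_le)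
  moreover have "norm v \<le> norm (u, v, w)" and "norm w \<le> norm (u, v, w)"
    using norm_fst_le[where x=v and y=w] norm_snd_le[where x=v and y=w] norm_snd_le[where x=u and y="(v, w)"]
    by linarith+
  ultimately show "\<bar>u$i$j\<bar> \<le> norm (u, v, w)" and "\<bar>v$k$l\<bar> \<le> norm (u, v, w)" and "\<bar>w$m$n\<bar> \<le> norm (u, v, w)"
    using abs_nth_le_norm[of u i j] abs_nth_le_norm[of v k l] abs_nth_le_norm[of w m n] by linarith+
qed

lemma Cinf_has_derivative_flatten:
  fixes C :: "real^'y^'x" and mX :: "real^'x^'x" and mY :: "real^'y^'y"
    and P :: "'x \<Rightarrow> 'y \<Rightarrow> real^'y^'x" and f :: "'x \<Rightarrow> 'y \<Rightarrow> real^'x" and g :: "'x \<Rightarrow> 'y \<Rightarrow> real^'y"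
  assumes X: "row_stochastic mX" and Y: "row_stochastic mY"
    and d0: "0 < \<delta>" and d1: "\<delta> \<le> 1" and e: "0 < \<epsilon>"
    and popt: "\<And>i j. is_opt_plan \<epsilon> (mX$i) (mY$j) (Cinf \<delta> \<epsilon> C mX mY) (P i j)"
    and dopt: "\<And>i j. is_dual_opt \<epsilon> (mX$i) (mY$j) (Cinf \<delta> \<epsilon> C mX mY) (f i j) (g i j)"
  shows "((\<lambda>(C', mX', mY'). flatten (Cinf \<delta> \<epsilon> C' mX' mY')) has_derivative
      (\<lambda>h. matrix_inv (mat 1 - (1 - \<delta>) *\<^sub>R plan_tensor P) *v data_derivative \<delta> f g h))
    (at (C, mX, mY) within {(C', mX', mY'). row_stochastic mX' \<and> row_stochastic mY'})"
proof -
  obtain K \<rho> where K: "0 \<le> K" and \<rho>: "0 < \<rho>"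
    and res: "\<And>C' mX' mY' s i j. row_stochastic mX' \<Longrightarrow> row_stochastic mY' \<Longrightarrow> s \<le> \<rho>
      \<Longrightarrow> \<forall>i j. \<bar>C'$i$j - C$i$j\<bar> \<le> s \<Longrightarrow> \<forall>i j. \<bar>mX'$i$j - mX$i$j\<bar> \<le> s \<Longrightarrow> \<forall>i j. \<bar>mY'$i$j - mY$i$j\<bar> \<le> s
      \<Longrightarrow> \<bar>Cinf \<delta> \<epsilon> C' mX' mY' $i$j - Cinf \<delta> \<epsilon> C mX mY $i$j - \<delta> * (C'$i$j - C$i$j)
           - (1 - \<delta>) * dW_linearization (P i j) (f i j) (g i j) (mX$i) (mX'$i) (mY$j) (mY'$j)
               (Cinf \<delta> \<epsilon> C mX mY) (Cinf \<delta> \<epsilon> C' mX' mY')\<bar> \<le> K * s\<^sup>2"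
    by (rule Cinf_first_order_residual[OF X Y d0 d1 e popt dopt]) (rule that)
  have inv: "invertible (mat 1 - (1 - \<delta>) *\<^sub>R plan_tensor P)"
    using popt X d0 d1 by (intro invertible_plan_tensor) (auto simp: is_opt_plan_def)
  show ?thesis
  proof (rule has_derivative_linear_recursion[OF inv bounded_linear_data_derivative \<rho>])
    show "0 \<le> real CARD('x \<times> 'y) * K" using K by simp
    fix y assume "y \<in> {(C', mX', mY'). row_stochastic mX' \<and> row_stochastic mY'}"
      and y\<rho>: "norm (y - (C, mX, mY)) \<le> \<rho>"
    then obtain C' mX' mY' where y: "y = (C', mX', mY')"
      and X': "row_stochastic mX'" and Y': "row_stochastic mY'" by auto
    define s where "s = norm (y - (C, mX, mY))"
    have diff: "y - (C, mX, mY) = (C' - C, mX' - mX, mY' - mY)" unfolding y by simp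
    have s\<rho>: "s \<le> \<rho>" using y\<rho> unfolding s_def .
    have sC: "\<forall>i j. \<bar>C'$i$j - C$i$j\<bar> \<le> s" and sX: "\<forall>i j. \<bar>mX'$i$j - mX$i$j\<bar> \<le> s"
      and sY: "\<forall>i j. \<bar>mY'$i$j - mY$i$j\<bar> \<le> s"
      using abs_nth_le_norm_triple[where u="C' - C" and v="mX' - mX" and w="mY' - mY"]
      unfolding s_def diff by simp_all
    let ?F = "\<lambda>(C', mX', mY'). flatten (Cinf \<delta> \<epsilon> C' mX' mY')"
    let ?v = "?F y - ?F (C, mX, mY) - ((1 - \<delta>) *\<^sub>R plan_tensor P) *v (?F y - ?F (C, mX, mY))
      - data_derivative \<delta> f g (y - (C, mX, mY))"
    have "\<bar>?v $ (i, j)\<bar> \<le> K * s\<^sup>2" for i j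
    proof -
      have "?v $ (i, j) = Cinf \<delta> \<epsilon> C' mX' mY' $i$j - Cinf \<delta> \<epsilon> C mX mY $i$j - \<delta> * (C'$i$j - C$i$j)
           - (1 - \<delta>) * dW_linearization (P i j) (f i j) (g i j) (mX$i) (mX'$i) (mY$j) (mY'$j)
               (Cinf \<delta> \<epsilon> C mX mY) (Cinf \<delta> \<epsilon> C' mX' mY')"
        unfolding y diff
        by (simp add: scaleR_matrix_vector_assoc[symmetric] flatten_diff[symmetric] plan_tensor_mult_flatten
            data_derivative_nth dW_linearization_def algebra_simps)
      also have "\<bar>\<dots>\<bar> \<le> K * s\<^sup>2" by (rule res[OF X' Y' s\<rho> sC sX sY])
      finally show ?thesis .
    qed
    then have "norm ?v \<le> real CARD('x \<times> 'y) * (K * s\<^sup>2)"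
      by (intro norm_le_card_mult_bound) auto
    then show "norm (?F y - ?F (C, mX, mY) - ((1 - \<delta>) *\<^sub>R plan_tensor P) *v (?F y - ?F (C, mX, mY))
        - data_derivative \<delta> f g (y - (C, mX, mY))) \<le> real CARD('x \<times> 'y) * K * (norm (y - (C, mX, mY)))\<^sup>2"
      unfolding s_def by (simp add: mult.assoc)
  qed
qed

lemma Cinf_has_derivative:
  fixes C :: "real^'y^'x" and mX :: "real^'x^'x" and mY :: "real^'y^'y"
    and P :: "'x \<Rightarrow> 'y \<Rightarrow> real^'y^'x" and f :: "'x \<Rightarrow> 'y \<Rightarrow> real^'x" and g :: "'x \<Rightarrow> 'y \<Rightarrow> real^'y"
  assumes "row_stochastic mX" and "row_stochastic mY" and "0 < \<delta>" and "\<delta> \<le> 1" and "0 < \<epsilon>"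
    and "\<And>i j. is_opt_plan \<epsilon> (mX$i) (mY$j) (Cinf \<delta> \<epsilon> C mX mY) (P i j)"
    and "\<And>i j. is_dual_opt \<epsilon> (mX$i) (mY$j) (Cinf \<delta> \<epsilon> C mX mY) (f i j) (g i j)"
  shows "((\<lambda>(C', mX', mY'). Cinf \<delta> \<epsilon> C' mX' mY') has_derivative
      (\<lambda>h. \<chi> i j. (matrix_inv (mat 1 - (1 - \<delta>) *\<^sub>R plan_tensor P) *v data_derivative \<delta> f g h) $ (i, j)))
    (at (C, mX, mY) within {(C', mX', mY'). row_stochastic mX' \<and> row_stochastic mY'})"
proof -
  have "bounded_linear (\<lambda>v :: real^('x \<times> 'y). \<chi> i j. v $ (i, j))"
    by (simp add: linear_conv_bounded_linear[symmetric] linear_iff vec_eq_iff)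
  from bounded_linear.has_derivative[OF this Cinf_has_derivative_flatten[OF assms]]
  show ?thesis by (simp add: case_prod_beta' vec_eq_iff)
qed

theorem theorem22:
  fixes C :: "real^'y^'x" and mX :: "real^'x^'x" and mY :: "real^'y^'y"
    and \<delta> \<epsilon> :: real
    and P :: "'x \<Rightarrow> 'y \<Rightarrow> real^'y^'x"
    and f :: "'x \<Rightarrow> 'y \<Rightarrow> real^'x" and g :: "'x \<Rightarrow> 'y \<Rightarrow> real^'y"
  assumes "row_stochastic mX" and "row_stochastic mY"
    and "\<forall>i j. 0 \<le> C$i$j"
    and "0 < \<delta>" and "\<delta> \<le> 1" and "0 < \<epsilon>"
    and "\<forall>i j. is_opt_plan \<epsilon> (mX$i) (mY$j) (Cinf \<delta> \<epsilon> C mX mY) (P i j)"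
    and "\<forall>i j. is_dual_opt \<epsilon> (mX$i) (mY$j) (Cinf \<delta> \<epsilon> C mX mY) (f i j) (g i j)"
  shows
    "let Pm = (\<chi> r c. P (fst r) (snd r) $ fst c $ snd c) :: real^('x\<times>'y)^('x\<times>'y);
         Fm = (\<chi> r c. if fst r = fst c then f (fst r) (snd r) $ snd c else 0) :: real^('x\<times>'x)^('x\<times>'y);
         Gm = (\<chi> r c. if snd r = fst c then g (fst r) (snd r) $ snd c else 0) :: real^('y\<times>'y)^('x\<times>'y);
         A = mat 1 - (1 - \<delta>) *\<^sub>R Pm;
         \<Delta> = \<delta> *\<^sub>R matrix_inv A;
         \<Gamma> = (1 - \<delta>) *\<^sub>R (matrix_inv A ** Fm);
         \<Theta> = (1 - \<delta>) *\<^sub>R (matrix_inv A ** Gm)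
     in invertible A \<and>
        ((\<lambda>(C', mX', mY'). Cinf \<delta> \<epsilon> C' mX' mY') has_derivative
          (\<lambda>(dC, dX, dY). \<chi> i j.
              (\<Sum>c\<in>UNIV. \<Delta> $ (i, j) $ c * dC $ fst c $ snd c)
            + (\<Sum>c\<in>UNIV. \<Gamma> $ (i, j) $ c * dX $ fst c $ snd c)
            + (\<Sum>c\<in>UNIV. \<Theta> $ (i, j) $ c * dY $ fst c $ snd c)))
        (at (C, mX, mY) within {(C', mX', mY'). row_stochastic mX' \<and> row_stochastic mY'})"
proof -
  have popt: "\<And>i j. is_opt_plan \<epsilon> (mX$i) (mY$j) (Cinf \<delta> \<epsilon> C mX mY) (P i j)"
    and dopt: "\<And>i j. is_dual_opt \<epsilon> (mX$i) (mY$j) (Cinf \<delta> \<epsilon> C mX mY) (f i j) (g i j)"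
    using assms(7,8) by blast+
  define Ai where "Ai = matrix_inv (mat 1 - (1 - \<delta>) *\<^sub>R plan_tensor P)"
  have "invertible (mat 1 - (1 - \<delta>) *\<^sub>R plan_tensor P)"
    using popt assms(1,4,5) by (intro invertible_plan_tensor) (auto simp: is_opt_plan_def)
  moreover have "(\<lambda>h. \<chi> i j. (Ai *v data_derivative \<delta> f g h) $ (i, j))
    = (\<lambda>(dC, dX, dY). \<chi> i j.
              (\<Sum>c\<in>UNIV. (\<delta> *\<^sub>R Ai) $ (i, j) $ c * dC $ fst c $ snd c)
            + (\<Sum>c\<in>UNIV. ((1 - \<delta>) *\<^sub>R (Ai ** row_potential_tensor f)) $ (i, j) $ c * dX $ fst c $ snd c)
            + (\<Sum>c\<in>UNIV. ((1 - \<delta>) *\<^sub>R (Ai ** col_potential_tensor g)) $ (i, j) $ c * dY $ fst c $ snd c))"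
    unfolding matrix_vector_mult_flatten_nth[symmetric]
    by (auto simp: fun_eq_iff data_derivative_def scaleR_matrix_vector_assoc[symmetric]
        matrix_vector_mul_assoc[symmetric] matrix_vector_right_distrib matrix_vector_mult_scaleR
        distrib_left add.assoc)
  ultimately show ?thesis
    using Cinf_has_derivative[OF assms(1,2,4-6) popt dopt]
    unfolding Let_def Ai_def plan_tensor_def row_potential_tensor_def col_potential_tensor_def
    by simp
qed

end
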